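(* Let $(\mu,\mathcal{S},L,\pi)$ (continuous time) and $(\mu,\mathcal{S},K,\pi)$ (discrete time) be irreducible, reversible finite Markov chains, $T_2(\mu,\cdot)$ the $L^2$-mixing time, and $\alpha(c)=\sqrt{\tau(c)\lambda_{j(c)}}$. (1) Continuous time: for $0<c<\pi(|\mu/\pi|^2)-1$ and $A>0$, \[\frac{\alpha(c)}{\alpha(c)+A}T_2\Big(\mu,\sqrt{c+\tfrac{A+\alpha(c)}{Ae^{\alpha(c)A}}}\Big)\le\tau(c)\le T_2\Big(\mu,\sqrt{\tfrac{c}{1+c}}\Big),\] and for $0<\epsilon<\sqrt{[\pi(|\mu/\pi-1|^2)\wedge1]/2}$, $\tau(2\epsilon^2)\le T_2(\mu,\epsilon)\le\frac{6}{\epsilon^4}\tau(\epsilon^2/2)$. (2) Discrete time: for $0<c<\pi(|\mu/\pi|^2)-1$ and $A>0$, \[\frac{\alpha(c)}{\alpha(c)+A}\Big(T_2\Big(\mu,\sqrt{c+\tfrac{A+\alpha(c)}{Ae^{\alpha(c)A}}}\Big)-1\Big)\le\tau(c)\le T_2\Big(\mu,\sqrt{\tfrac{c}{1+c}}\Big),\] and for $0<\epsilon<\sqrt{[\pi(|\mu/\pi-1|^2)\wedge1]/2}$, $\tau(2\epsilon^2)\le T_2(\mu,\epsilon)\le\frac{6}{\epsilon^4}\tau(\epsilon^2/2)+1$.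
   Context: $L^2$-distance: continuous time $d_2(\mu,t)=\|\mu e^{tL}/\pi-1\|_{L^2(\pi)}$, discrete time $d_2(\mu,m)=\|\mu K^m/\pi-1\|_{L^2(\pi)}$ ($m$ integer), where $\|f\|_{L^2(\pi)}^2=\sum_y|f(y)|^2\pi(y)$; $T_2(\mu,\epsilon)=\min\{t\ge0:d_2(\mu,t)\le\epsilon\}$ (integer $t$ in discrete time); $\pi(|f|^2)=\sum_y|f(y)|^2\pi(y)$. Continuous time: $0=\lambda_0<\lambda_1\le\dots\le\lambda_{|\mathcal{S}|-1}$ eigenvalues of $-L$ with $L^2(\pi)$-orthonormal right eigenvectors $\phi_0=\mathbf1,\phi_1,\dots$. Discrete time: eigenvalues $\beta_0=1,\beta_1,\dots$ of $K$ with $|\beta_1|\ge|\beta_2|\ge\cdots$, orthonormal eigenvectors $\phi_i$, and $\lambda_i:=-\log|\beta_i|$ ($-\log0=\infty$, $1/\infty=0$). In both cases $\mu(\phi)=\sum_x\mu(x)\phi(x)$, $j(c)=\min\{j\ge1:\sum_{i=1}^j|\mu(\phi_i)|^2>c\}$, $\tau(c)=\max_{j\ge j(c)}\frac{\log(1+\sum_{i=1}^j|\mu(\phi_i)|^2)}{2\lambda_j}$. *)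

theory Defs
  imports Complex_Main "HOL-Library.Extended_Real" "HOL-Library.Extended_Nat"
begin

definition prob_vec :: "('a::finite \<Rightarrow> real) \<Rightarrow> bool" where
  "prob_vec \<mu> \<longleftrightarrow> (\<forall>x. 0 \<le> \<mu> x) \<and> (\<Sum>x\<in>UNIV. \<mu> x) = 1"

definition pos_prob_vec :: "('a::finite \<Rightarrow> real) \<Rightarrow> bool" where
  "pos_prob_vec \<pi> \<longleftrightarrow> (\<forall>x. 0 < \<pi> x) \<and> (\<Sum>x\<in>UNIV. \<pi> x) = 1"

definition generator :: "('a::finite \<Rightarrow> 'a \<Rightarrow> real) \<Rightarrow> bool" where
  "generator L \<longleftrightarrow> (\<forall>x y. x \<noteq> y \<longrightarrow> 0 \<le> L x y) \<and> (\<forall>x. (\<Sum>y\<in>UNIV. L x y) = 0)"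

definition stochastic :: "('a::finite \<Rightarrow> 'a \<Rightarrow> real) \<Rightarrow> bool" where
  "stochastic K \<longleftrightarrow> (\<forall>x y. 0 \<le> K x y) \<and> (\<forall>x. (\<Sum>y\<in>UNIV. K x y) = 1)"

definition irreducible_kernel :: "('a \<Rightarrow> 'a \<Rightarrow> real) \<Rightarrow> bool" where
  "irreducible_kernel Q \<longleftrightarrow> (\<forall>x y. (x, y) \<in> {(a, b). a \<noteq> b \<and> 0 < Q a b}\<^sup>*)"

definition reversible :: "('a \<Rightarrow> 'a \<Rightarrow> real) \<Rightarrow> ('a \<Rightarrow> real) \<Rightarrow> bool" where
  "reversible Q \<pi> \<longleftrightarrow> (\<forall>x y. \<pi> x * Q x y = \<pi> y * Q y x)"

primrec mpow :: "('a::finite \<Rightarrow> 'a \<Rightarrow> real) \<Rightarrow> nat \<Rightarrow> 'a \<Rightarrow> 'a \<Rightarrow> real" where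
  "mpow Q 0 = (\<lambda>x y. if x = y then 1 else 0)"
| "mpow Q (Suc k) = (\<lambda>x y. \<Sum>z\<in>UNIV. mpow Q k x z * Q z y)"

definition heat :: "('a::finite \<Rightarrow> 'a \<Rightarrow> real) \<Rightarrow> real \<Rightarrow> 'a \<Rightarrow> 'a \<Rightarrow> real" where
  "heat L t x y = (\<Sum>k. t ^ k / fact k * mpow L k x y)"

definition l2norm :: "('a::finite \<Rightarrow> real) \<Rightarrow> ('a \<Rightarrow> real) \<Rightarrow> real" where
  "l2norm \<pi> f = sqrt (\<Sum>y\<in>UNIV. (f y)\<^sup>2 * \<pi> y)"

definition pi_sq :: "('a::finite \<Rightarrow> real) \<Rightarrow> ('a \<Rightarrow> real) \<Rightarrow> real" where
  "pi_sq \<pi> f = (\<Sum>y\<in>UNIV. (f y)\<^sup>2 * \<pi> y)"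

definition d2_ct :: "('a::finite \<Rightarrow> 'a \<Rightarrow> real) \<Rightarrow> ('a \<Rightarrow> real) \<Rightarrow> ('a \<Rightarrow> real) \<Rightarrow> real \<Rightarrow> real" where
  "d2_ct L \<pi> \<mu> t = l2norm \<pi> (\<lambda>y. (\<Sum>x\<in>UNIV. \<mu> x * heat L t x y) / \<pi> y - 1)"

definition d2_dt :: "('a::finite \<Rightarrow> 'a \<Rightarrow> real) \<Rightarrow> ('a \<Rightarrow> real) \<Rightarrow> ('a \<Rightarrow> real) \<Rightarrow> nat \<Rightarrow> real" where
  "d2_dt K \<pi> \<mu> m = l2norm \<pi> (\<lambda>y. (\<Sum>x\<in>UNIV. \<mu> x * mpow K m x y) / \<pi> y - 1)"

text \<open>T_2 in continuous time: min { t >= 0 : d_2(mu,t) <= eps } (the set is closed, so Inf = min).\<close>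
definition T2_ct :: "('a::finite \<Rightarrow> 'a \<Rightarrow> real) \<Rightarrow> ('a \<Rightarrow> real) \<Rightarrow> ('a \<Rightarrow> real) \<Rightarrow> real \<Rightarrow> real" where
  "T2_ct L \<pi> \<mu> \<epsilon> = Inf {t. 0 \<le> t \<and> d2_ct L \<pi> \<mu> t \<le> \<epsilon>}"

definition T2_dt :: "('a::finite \<Rightarrow> 'a \<Rightarrow> real) \<Rightarrow> ('a \<Rightarrow> real) \<Rightarrow> ('a \<Rightarrow> real) \<Rightarrow> real \<Rightarrow> enat" where
  "T2_dt K \<pi> \<mu> \<epsilon> = (if \<exists>m. d2_dt K \<pi> \<mu> m \<le> \<epsilon>
      then enat (LEAST m. d2_dt K \<pi> \<mu> m \<le> \<epsilon>) else \<infinity>)"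

definition mu_of :: "('a::finite \<Rightarrow> real) \<Rightarrow> ('a \<Rightarrow> real) \<Rightarrow> real" where
  "mu_of \<mu> f = (\<Sum>x\<in>UNIV. \<mu> x * f x)"

definition spec_sum :: "('a::finite \<Rightarrow> real) \<Rightarrow> (nat \<Rightarrow> 'a \<Rightarrow> real) \<Rightarrow> nat \<Rightarrow> real" where
  "spec_sum \<mu> \<phi> j = (\<Sum>i=1..j. (mu_of \<mu> (\<phi> i))\<^sup>2)"

definition jc :: "('a::finite \<Rightarrow> real) \<Rightarrow> (nat \<Rightarrow> 'a \<Rightarrow> real) \<Rightarrow> real \<Rightarrow> nat" where
  "jc \<mu> \<phi> c = (LEAST j. 1 \<le> j \<and> c < spec_sum \<mu> \<phi> j)"

definition ct_spectral :: "('a::finite \<Rightarrow> 'a \<Rightarrow> real) \<Rightarrow> ('a \<Rightarrow> real) \<Rightarrow> (nat \<Rightarrow> real) \<Rightarrow> (nat \<Rightarrow> 'a \<Rightarrow> real) \<Rightarrow> bool" where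
  "ct_spectral L \<pi> lam \<phi> \<longleftrightarrow>
     lam 0 = 0 \<and> \<phi> 0 = (\<lambda>x. 1) \<and>
     (\<forall>i j. i \<le> j \<and> j < card (UNIV :: 'a set) \<longrightarrow> lam i \<le> lam j) \<and>
     (\<forall>i<card (UNIV :: 'a set). \<forall>k<card (UNIV :: 'a set). (\<Sum>x\<in>UNIV. \<phi> i x * \<phi> k x * \<pi> x) = (if i = k then 1 else 0)) \<and>
     (\<forall>i<card (UNIV :: 'a set). \<forall>x. (\<Sum>y\<in>UNIV. L x y * \<phi> i y) = - lam i * \<phi> i x)"

definition dt_spectral :: "('a::finite \<Rightarrow> 'a \<Rightarrow> real) \<Rightarrow> ('a \<Rightarrow> real) \<Rightarrow> (nat \<Rightarrow> real) \<Rightarrow> (nat \<Rightarrow> 'a \<Rightarrow> real) \<Rightarrow> bool" where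
  "dt_spectral K \<pi> \<beta> \<phi> \<longleftrightarrow>
     \<beta> 0 = 1 \<and> \<phi> 0 = (\<lambda>x. 1) \<and>
     (\<forall>i j. 1 \<le> i \<and> i \<le> j \<and> j < card (UNIV :: 'a set) \<longrightarrow> \<bar>\<beta> j\<bar> \<le> \<bar>\<beta> i\<bar>) \<and>
     (\<forall>i<card (UNIV :: 'a set). \<forall>k<card (UNIV :: 'a set). (\<Sum>x\<in>UNIV. \<phi> i x * \<phi> k x * \<pi> x) = (if i = k then 1 else 0)) \<and>
     (\<forall>i<card (UNIV :: 'a set). \<forall>x. (\<Sum>y\<in>UNIV. K x y * \<phi> i y) = \<beta> i * \<phi> i x)"

definition tau_ct :: "('a::finite \<Rightarrow> real) \<Rightarrow> (nat \<Rightarrow> real) \<Rightarrow> (nat \<Rightarrow> 'a \<Rightarrow> real) \<Rightarrow> real \<Rightarrow> real" where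
  "tau_ct \<mu> lam \<phi> c =
     Max ((\<lambda>j. ln (1 + spec_sum \<mu> \<phi> j) / (2 * lam j)) ` {jc \<mu> \<phi> c ..< card (UNIV :: 'a set)})"

definition alpha_ct :: "('a::finite \<Rightarrow> real) \<Rightarrow> (nat \<Rightarrow> real) \<Rightarrow> (nat \<Rightarrow> 'a \<Rightarrow> real) \<Rightarrow> real \<Rightarrow> real" where
  "alpha_ct \<mu> lam \<phi> c = sqrt (tau_ct \<mu> lam \<phi> c * lam (jc \<mu> \<phi> c))"

text \<open>Discrete time: lambda_i = -log|beta_i| in the extended reals, with -log 0 = infinity.
  Divisions below are extended-real divisions (x / infinity = 0, x / 0 = infinity for x > 0).\<close>
definition lam_dt :: "(nat \<Rightarrow> real) \<Rightarrow> nat \<Rightarrow> ereal" where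
  "lam_dt \<beta> i = (if \<beta> i = 0 then \<infinity> else ereal (- ln \<bar>\<beta> i\<bar>))"

definition tau_dt :: "('a::finite \<Rightarrow> real) \<Rightarrow> (nat \<Rightarrow> real) \<Rightarrow> (nat \<Rightarrow> 'a \<Rightarrow> real) \<Rightarrow> real \<Rightarrow> ereal" where
  "tau_dt \<mu> \<beta> \<phi> c =
     Max ((\<lambda>j. ereal (ln (1 + spec_sum \<mu> \<phi> j)) / (2 * lam_dt \<beta> j)) ` {jc \<mu> \<phi> c ..< card (UNIV :: 'a set)})"

text \<open>alpha(c) = sqrt(tau(c) lambda_{j(c)}), with 0 * infinity = 0; only meaningful when tau(c) is finite
  (when tau(c) = infinity the inequality involving alpha is trivially true).\<close>
definition alpha_dt :: "('a::finite \<Rightarrow> real) \<Rightarrow> (nat \<Rightarrow> real) \<Rightarrow> (nat \<Rightarrow> 'a \<Rightarrow> real) \<Rightarrow> real \<Rightarrow> real" where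
  "alpha_dt \<mu> \<beta> \<phi> c = sqrt (real_of_ereal (tau_dt \<mu> \<beta> \<phi> c * lam_dt \<beta> (jc \<mu> \<phi> c)))"

end

theory Submission
  imports Defs "HOL-Analysis.Analysis"
begin

text \<open>
  Expanding \<mu>/\<pi> - 1 in the \<pi>-orthonormal eigenbasis gives, with a_i = \<mu>(\<phi>_i)^2,
  d_2(\<mu>,t)^2 = \<Sum>_{i\<ge>1} a_i e^(-2t\<lambda>_i) (resp. \<Sum>_{i\<ge>1} a_i \<beta>_i^(2m)), a sum with weights
  decreasing in i. If d_2(\<mu>,t)^2 \<le> c/(1+c), then for every j \<ge> j(c) the weight w_j satisfies
  w_j (1 + a_1 + ... + a_j) < 1, which says exactly that t is at least the j-th term of \<tau>(c).
  Conversely, at time s = \<tau>(c)(\<alpha>+A)/\<alpha> the indices below j(c) contribute at most c, while the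
  definition of \<tau>(c) bounds each tail weight u_j by (1 + a_1 + ... + a_j)^(-1/(1-p)),
  p = A/(\<alpha>+A); Abel summation and concavity of x \<mapsto> x^p then bound the tail by
  u_{j(c)}^p/p \<le> (A+\<alpha>)/(A e^(\<alpha>A)). The \<epsilon>-bounds are the cases c = 2\<epsilon>^2 and
  c = \<epsilon>^2/2, A = (6/\<epsilon>^4 - 1)\<alpha>. In discrete time the mixing time is an integer, which costs the
  additive 1.
\<close>

definition pi_orthonormal :: "('a::finite \<Rightarrow> real) \<Rightarrow> (nat \<Rightarrow> 'a \<Rightarrow> real) \<Rightarrow> bool" where
  "pi_orthonormal \<pi> \<phi> \<longleftrightarrow> (\<forall>x. 0 < \<pi> x) \<and> (\<forall>i<CARD('a). \<forall>k<CARD('a).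
      (\<Sum>x\<in>UNIV. \<phi> i x * \<phi> k x * \<pi> x) = (if i = k then 1 else 0))"

lemma pi_orthonormal_scaled_completeness:
  fixes \<pi> :: "'a::finite \<Rightarrow> real"
  assumes "pi_orthonormal \<pi> \<phi>"
  shows "(\<Sum>i<CARD('a). \<phi> i x * sqrt (\<pi> x) * (\<phi> i y * sqrt (\<pi> y))) = (if x = y then 1 else 0)"
proof -
  define n where "n = CARD('a)"
  define v where "v i = (\<chi> x. \<phi> i x * sqrt (\<pi> x))" for i :: nat
  have v_inner: "v i \<bullet> v k = (if i = k then 1 else 0)" if "i < n" "k < n" for i k
  proof -
    have "v i \<bullet> v k = (\<Sum>x\<in>UNIV. \<phi> i x * \<phi> k x * \<pi> x)"
      unfolding v_def inner_vec_def using assms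
      by (intro sum.cong refl)
        (simp add: pi_orthonormal_def less_imp_le algebra_simps flip: real_sqrt_mult)
    then show ?thesis using assms that unfolding n_def pi_orthonormal_def by simp
  qed
  define B where "B = v ` {..<n}"
  have inj: "inj_on v {..<n}"
  proof (rule inj_onI)
    fix i k assume "i \<in> {..<n}" "k \<in> {..<n}" "v i = v k"
    then show "i = k" using v_inner[of i i] v_inner[of i k] by (auto split: if_splits)
  qed
  have orth: "pairwise orthogonal B"
    unfolding B_def pairwise_def orthogonal_def using v_inner by auto
  have "independent B"
    by (rule pairwise_orthogonal_independent[OF orth]) (use v_inner in \<open>force simp: B_def\<close>)
  then have "UNIV \<subseteq> span B"
    using card_eq_dim[of B UNIV] inj unfolding n_def B_def by (simp add: card_image)
  define z where "z = (axis y (1::real) :: real^'a)"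
  have "(\<Sum>b\<in>B. (z \<bullet> b) *\<^sub>R b) = z"
    by (rule orthonormal_basis_expand[OF orth])
      (use v_inner \<open>UNIV \<subseteq> span B\<close> in \<open>auto simp: B_def norm_eq_1\<close>)
  then have "z = (\<Sum>i<n. (z \<bullet> v i) *\<^sub>R v i)" unfolding B_def sum.reindex[OF inj] by simp
  then have "z $ x = (\<Sum>i<n. ((z \<bullet> v i) *\<^sub>R v i) $ x)" by (metis sum_component)
  moreover have "z \<bullet> v i = \<phi> i y * sqrt (\<pi> y)" for i
    unfolding z_def by (simp add: inner_axis' v_def)
  ultimately have "(if x = y then 1 else 0) = (\<Sum>i<n. \<phi> i y * sqrt (\<pi> y) * (\<phi> i x * sqrt (\<pi> x)))"
    unfolding z_def v_def by (simp add: axis_def)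
  then show ?thesis unfolding n_def by (simp add: mult.commute)
qed

lemma pi_orthonormal_completeness:
  fixes \<pi> :: "'a::finite \<Rightarrow> real"
  assumes "pi_orthonormal \<pi> \<phi>"
  shows "(\<Sum>i<CARD('a). \<phi> i x * \<phi> i y * \<pi> y) = (if x = y then 1 else 0)"
proof -
  have pos: "0 < \<pi> x" "0 < \<pi> y" using assms unfolding pi_orthonormal_def by auto
  have "(\<Sum>i<CARD('a). \<phi> i x * \<phi> i y * \<pi> y)
      = sqrt (\<pi> y) / sqrt (\<pi> x) * (\<Sum>i<CARD('a). \<phi> i x * sqrt (\<pi> x) * (\<phi> i y * sqrt (\<pi> y)))"
    unfolding sum_distrib_left
    by (intro sum.cong refl) (use pos in \<open>simp add: field_simps less_imp_le flip: real_sqrt_mult\<close>)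
  also have "\<dots> = (if x = y then 1 else 0)"
    using pi_orthonormal_scaled_completeness[OF assms] pos by simp
  finally show ?thesis .
qed

lemma pi_orthonormal_expansion:
  fixes f :: "'a::finite \<Rightarrow> real"
  assumes "pi_orthonormal \<pi> \<phi>"
  shows "f x = (\<Sum>i<CARD('a). (\<Sum>y\<in>UNIV. f y * \<phi> i y * \<pi> y) * \<phi> i x)"
proof -
  have "f x = (\<Sum>y\<in>UNIV. if x = y then f y else 0)" by simp
  also have "\<dots> = (\<Sum>y\<in>UNIV. f y * (if x = y then 1 else 0))"
    by (intro sum.cong refl) auto
  also have "\<dots> = (\<Sum>y\<in>UNIV. f y * (\<Sum>i<CARD('a). \<phi> i x * \<phi> i y * \<pi> y))"
    using pi_orthonormal_completeness[OF assms] by simp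
  also have "\<dots> = (\<Sum>i<CARD('a). (\<Sum>y\<in>UNIV. f y * \<phi> i y * \<pi> y) * \<phi> i x)"
    unfolding sum_distrib_left sum_distrib_right by (subst sum.swap) (simp add: algebra_simps)
  finally show ?thesis .
qed

lemma pi_orthonormal_parseval:
  fixes c :: "nat \<Rightarrow> real"
  assumes "pi_orthonormal \<pi> (\<phi> :: nat \<Rightarrow> 'a::finite \<Rightarrow> real)" "I \<subseteq> {..<CARD('a)}"
  shows "(\<Sum>y\<in>UNIV. (\<Sum>i\<in>I. c i * \<phi> i y)\<^sup>2 * \<pi> y) = (\<Sum>i\<in>I. (c i)\<^sup>2)"
proof -
  have fin: "finite I" using assms(2) finite_subset by blast
  have "(\<Sum>y\<in>UNIV. (\<Sum>i\<in>I. c i * \<phi> i y)\<^sup>2 * \<pi> y)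
      = (\<Sum>y\<in>UNIV. \<Sum>i\<in>I. \<Sum>k\<in>I. c i * c k * (\<phi> i y * \<phi> k y * \<pi> y))"
  proof (intro sum.cong refl)
    fix y
    have "(\<Sum>i\<in>I. c i * \<phi> i y)\<^sup>2 * \<pi> y = (\<Sum>i\<in>I. \<Sum>k\<in>I. (c i * \<phi> i y) * (c k * \<phi> k y)) * \<pi> y"
      by (simp add: power2_eq_square sum_product)
    then show "(\<Sum>i\<in>I. c i * \<phi> i y)\<^sup>2 * \<pi> y = (\<Sum>i\<in>I. \<Sum>k\<in>I. c i * c k * (\<phi> i y * \<phi> k y * \<pi> y))"
      unfolding sum_distrib_right by (simp add: algebra_simps)
  qed
  also have "\<dots> = (\<Sum>i\<in>I. \<Sum>k\<in>I. c i * c k * (\<Sum>y\<in>UNIV. \<phi> i y * \<phi> k y * \<pi> y))"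
    unfolding sum_distrib_left by (subst sum.swap) (simp add: sum.swap[of _ I UNIV])
  also have "\<dots> = (\<Sum>i\<in>I. \<Sum>k\<in>I. c i * c k * (if i = k then 1 else 0))"
  proof (intro sum.cong refl)
    fix i k assume "i \<in> I" "k \<in> I"
    then have "i < CARD('a)" "k < CARD('a)" using assms(2) by auto
    then show "c i * c k * (\<Sum>y\<in>UNIV. \<phi> i y * \<phi> k y * \<pi> y) = c i * c k * (if i = k then 1 else 0)"
      using assms(1) unfolding pi_orthonormal_def by simp
  qed
  also have "\<dots> = (\<Sum>i\<in>I. (c i)\<^sup>2)"
    using fin by (simp add: power2_eq_square if_distrib sum.delta cong: if_cong)
  finally show ?thesis .
qed

lemma mpow_spectral:
  fixes Q :: "'a::finite \<Rightarrow> 'a \<Rightarrow> real"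
  assumes orthonormal: "pi_orthonormal \<pi> \<phi>" and rev: "reversible Q \<pi>"
    and eig: "\<And>i x. i < CARD('a) \<Longrightarrow> (\<Sum>y\<in>UNIV. Q x y * \<phi> i y) = \<beta> i * \<phi> i x"
  shows "mpow Q k x y = (\<Sum>i<CARD('a). \<beta> i ^ k * \<phi> i x * \<phi> i y * \<pi> y)"
proof (induction k arbitrary: y)
  case 0
  then show ?case using pi_orthonormal_completeness[OF orthonormal] by simp
next
  case (Suc k)
  have detailed: "\<pi> z * Q z y = \<pi> y * Q y z" for z using rev unfolding reversible_def by blast
  have "mpow Q (Suc k) x y = (\<Sum>z\<in>UNIV. (\<Sum>i<CARD('a). \<beta> i ^ k * \<phi> i x * \<phi> i z * \<pi> z) * Q z y)"
    using Suc by simp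
  also have "\<dots> = (\<Sum>z\<in>UNIV. \<Sum>i<CARD('a). \<beta> i ^ k * \<phi> i x * \<phi> i z * (\<pi> z * Q z y))"
    unfolding sum_distrib_right by (simp add: algebra_simps)
  also have "\<dots> = (\<Sum>i<CARD('a). \<beta> i ^ k * \<phi> i x * \<pi> y * (\<Sum>z\<in>UNIV. Q y z * \<phi> i z))"
    unfolding detailed sum_distrib_left by (subst sum.swap) (simp add: algebra_simps)
  also have "\<dots> = (\<Sum>i<CARD('a). \<beta> i ^ Suc k * \<phi> i x * \<phi> i y * \<pi> y)"
    by (intro sum.cong refl) (simp add: eig algebra_simps)
  finally show ?case .
qed

lemma heat_spectral:
  fixes L :: "'a::finite \<Rightarrow> 'a \<Rightarrow> real"
  assumes orthonormal: "pi_orthonormal \<pi> \<phi>" and rev: "reversible L \<pi>"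
    and eig: "\<And>i x. i < CARD('a) \<Longrightarrow> (\<Sum>y\<in>UNIV. L x y * \<phi> i y) = - lam i * \<phi> i x"
  shows "heat L t x y = (\<Sum>i<CARD('a). exp (- t * lam i) * \<phi> i x * \<phi> i y * \<pi> y)"
proof -
  have "t ^ k / fact k * mpow L k x y
      = (\<Sum>i<CARD('a). ((t * - lam i) ^ k /\<^sub>R fact k) * (\<phi> i x * \<phi> i y * \<pi> y))" for k
  proof -
    have mp: "mpow L k x y = (\<Sum>i<CARD('a). (- lam i) ^ k * \<phi> i x * \<phi> i y * \<pi> y)"
      by (rule mpow_spectral) (use orthonormal rev eig in auto)
    show ?thesis unfolding mp sum_distrib_left
      by (intro sum.cong refl)
        (simp only: power_mult_distrib, simp add: divide_inverse algebra_simps)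
  qed
  then have "(\<lambda>k. t ^ k / fact k * mpow L k x y)
      sums (\<Sum>i<CARD('a). exp (t * - lam i) * (\<phi> i x * \<phi> i y * \<pi> y))"
    by (simp only:) (intro sums_sum sums_mult2 exp_converges)
  then show ?thesis unfolding heat_def by (simp add: sums_unique[symmetric] mult.assoc)
qed

lemma lessThan_card_eq_insert_0:
  "{..<CARD('a::finite)} = insert 0 {1..CARD('a) - 1}"
  using zero_less_card_finite[where 'a='a] by auto

lemma le_card_minus_one_iff: "j \<le> CARD('a::finite) - 1 \<longleftrightarrow> j < CARD('a)"
  using zero_less_card_finite[where 'a='a] by linarith

lemma mu_of_const_one: "prob_vec \<mu> \<Longrightarrow> mu_of \<mu> (\<lambda>x. 1) = 1"
  unfolding prob_vec_def mu_of_def by simp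

lemma l2norm_density_spectral:
  fixes \<mu> \<pi> :: "'a::finite \<Rightarrow> real"
  assumes orthonormal: "pi_orthonormal \<pi> \<phi>" and \<phi>0: "\<phi> 0 = (\<lambda>x. 1)" and \<mu>: "prob_vec \<mu>"
    and w0: "w 0 = 1"
    and M: "\<And>x y. M x y = (\<Sum>i<CARD('a). w i * \<phi> i x * \<phi> i y * \<pi> y)"
  shows "l2norm \<pi> (\<lambda>y. (\<Sum>x\<in>UNIV. \<mu> x * M x y) / \<pi> y - 1)
       = sqrt (\<Sum>i=1..CARD('a) - 1. (w i)\<^sup>2 * (mu_of \<mu> (\<phi> i))\<^sup>2)"
proof -
  have "(\<Sum>x\<in>UNIV. \<mu> x * M x y) / \<pi> y - 1 = (\<Sum>i=1..CARD('a) - 1. w i * mu_of \<mu> (\<phi> i) * \<phi> i y)" for y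
  proof -
    have "(\<Sum>x\<in>UNIV. \<mu> x * M x y) = \<pi> y * (\<Sum>i<CARD('a). w i * mu_of \<mu> (\<phi> i) * \<phi> i y)"
      unfolding M mu_of_def sum_distrib_left sum_distrib_right
      by (subst sum.swap) (intro sum.cong refl, simp add: algebra_simps)
    moreover have "0 < \<pi> y" using orthonormal unfolding pi_orthonormal_def by auto
    ultimately show ?thesis
      unfolding lessThan_card_eq_insert_0 using \<phi>0 w0 \<mu> by (simp add: mu_of_const_one)
  qed
  moreover have "(\<Sum>y\<in>UNIV. (\<Sum>i=1..CARD('a) - 1. w i * mu_of \<mu> (\<phi> i) * \<phi> i y)\<^sup>2 * \<pi> y)
      = (\<Sum>i=1..CARD('a) - 1. (w i * mu_of \<mu> (\<phi> i))\<^sup>2)"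
    by (rule pi_orthonormal_parseval[OF orthonormal]) auto
  ultimately show ?thesis unfolding l2norm_def by (simp add: power_mult_distrib)
qed

lemma pi_sq_density_eq_spec_sum:
  fixes \<mu> \<pi> :: "'a::finite \<Rightarrow> real"
  assumes orthonormal: "pi_orthonormal \<pi> \<phi>" and \<phi>0: "\<phi> 0 = (\<lambda>x. 1)" and \<mu>: "prob_vec \<mu>"
  shows "pi_sq \<pi> (\<lambda>y. \<mu> y / \<pi> y) - 1 = spec_sum \<mu> \<phi> (CARD('a) - 1)"
proof -
  have pos: "0 < \<pi> y" for y using orthonormal unfolding pi_orthonormal_def by auto
  have "(\<Sum>y\<in>UNIV. \<mu> y / \<pi> y * \<phi> i y * \<pi> y) = mu_of \<mu> (\<phi> i)" for i
    unfolding mu_of_def using pos by (intro sum.cong refl) (simp add: less_imp_neq[symmetric])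
  then have "\<mu> y / \<pi> y = (\<Sum>i<CARD('a). mu_of \<mu> (\<phi> i) * \<phi> i y)" for y
    using pi_orthonormal_expansion[OF orthonormal, of "\<lambda>y. \<mu> y / \<pi> y" y] by simp
  then have "pi_sq \<pi> (\<lambda>y. \<mu> y / \<pi> y) = (\<Sum>i<CARD('a). (mu_of \<mu> (\<phi> i))\<^sup>2)"
    unfolding pi_sq_def by (simp add: pi_orthonormal_parseval[OF orthonormal])
  then show ?thesis
    unfolding lessThan_card_eq_insert_0 spec_sum_def using \<phi>0 \<mu> by (simp add: mu_of_const_one)
qed

lemma pi_sq_centered:
  fixes \<mu> \<pi> :: "'a::finite \<Rightarrow> real"
  assumes "pos_prob_vec \<pi>" "prob_vec \<mu>"
  shows "pi_sq \<pi> (\<lambda>y. \<mu> y / \<pi> y - 1) = pi_sq \<pi> (\<lambda>y. \<mu> y / \<pi> y) - 1"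
proof -
  have pos: "0 < \<pi> y" for y using assms unfolding pos_prob_vec_def by auto
  have "pi_sq \<pi> (\<lambda>y. \<mu> y / \<pi> y - 1) = (\<Sum>y\<in>UNIV. (\<mu> y / \<pi> y)\<^sup>2 * \<pi> y - 2 * \<mu> y + \<pi> y)"
    unfolding pi_sq_def using pos
    by (intro sum.cong refl) (simp add: power2_eq_square field_simps less_imp_neq[symmetric])
  also have "\<dots> = pi_sq \<pi> (\<lambda>y. \<mu> y / \<pi> y) - 1"
    using assms unfolding pi_sq_def pos_prob_vec_def prob_vec_def
    by (simp add: sum.distrib sum_subtractf sum_distrib_left[symmetric])
  finally show ?thesis .
qed

lemma spec_sum_nonneg: "0 \<le> spec_sum \<mu> \<phi> j"
  unfolding spec_sum_def by (rule sum_nonneg) simp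

lemma spec_sum_mono: "i \<le> j \<Longrightarrow> spec_sum \<mu> \<phi> i \<le> spec_sum \<mu> \<phi> j"
  unfolding spec_sum_def by (rule sum_mono2) auto

lemma jc_bounds:
  assumes "0 < c" "c < spec_sum \<mu> \<phi> N"
  shows "1 \<le> jc \<mu> \<phi> c" "jc \<mu> \<phi> c \<le> N" "c < spec_sum \<mu> \<phi> (jc \<mu> \<phi> c)"
    "spec_sum \<mu> \<phi> (jc \<mu> \<phi> c - 1) \<le> c"
proof -
  have "N \<noteq> 0" using assms by (cases N) (auto simp: spec_sum_def)
  then have ex: "1 \<le> N \<and> c < spec_sum \<mu> \<phi> N" using assms by simp
  show "1 \<le> jc \<mu> \<phi> c" "c < spec_sum \<mu> \<phi> (jc \<mu> \<phi> c)"
    using LeastI[of "\<lambda>j. 1 \<le> j \<and> c < spec_sum \<mu> \<phi> j", OF ex] unfolding jc_def by auto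
  show "jc \<mu> \<phi> c \<le> N" unfolding jc_def by (rule Least_le) (rule ex)
  show "spec_sum \<mu> \<phi> (jc \<mu> \<phi> c - 1) \<le> c"
  proof (cases "jc \<mu> \<phi> c - 1 = 0")
    case True then show ?thesis using assms by (simp add: spec_sum_def)
  next
    case False
    then have "\<not> (1 \<le> jc \<mu> \<phi> c - 1 \<and> c < spec_sum \<mu> \<phi> (jc \<mu> \<phi> c - 1))"
      unfolding jc_def by (intro not_less_Least) (simp add: jc_def)
    then show ?thesis using False by auto
  qed
qed

lemma finite_fun_attains_max:
  fixes f :: "'a::finite \<Rightarrow> 'b::linorder"
  obtains x0 where "\<And>y. f y \<le> f x0"
proof -
  have "Max (range f) \<in> range f" by (rule Max_in) auto
  then obtain x0 where "f x0 = Max (range f)" by (metis imageE)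
  then show ?thesis using that[of x0] by simp
qed

lemma generator_harmonic_const:
  fixes L :: "'a::finite \<Rightarrow> 'a \<Rightarrow> real"
  assumes gen: "generator L" and irr: "irreducible_kernel L"
    and harm: "\<And>x. (\<Sum>y\<in>UNIV. L x y * f y) = 0"
  shows "f x = f y"
proof -
  obtain x0 where max: "\<And>y. f y \<le> f x0" using finite_fun_attains_max by blast
  define R where "R = {(a, b). a \<noteq> b \<and> 0 < L a b}"
  have propagate: "f b = f x0" if "f a = f x0" "(a, b) \<in> R" for a b
  proof -
    have "(\<Sum>y\<in>UNIV. L a y * (f y - f a)) = (\<Sum>y\<in>UNIV. L a y * f y) - f a * (\<Sum>y\<in>UNIV. L a y)"
      by (simp add: algebra_simps sum_subtractf sum_distrib_left)
    also have "\<dots> = 0" using harm gen unfolding generator_def by simp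
    finally have "(\<Sum>y\<in>UNIV. - (L a y * (f y - f a))) = 0" by (simp add: sum_negf)
    moreover have "0 \<le> - (L a y * (f y - f a))" for y
      using gen max[of y] that(1) unfolding generator_def
        by (cases "y = a") (auto simp: mult_nonneg_nonpos)
    ultimately have "L a b * (f b - f a) = 0" by (simp add: sum_nonneg_eq_0_iff)
    then show ?thesis using that unfolding R_def by simp
  qed
  have "f z = f x0" if "(x0, z) \<in> R\<^sup>*" for z
    using that by (induction rule: rtrancl_induct) (auto intro: propagate)
  moreover have "(x0, x) \<in> R\<^sup>*" "(x0, y) \<in> R\<^sup>*"
    using irr unfolding irreducible_kernel_def R_def by auto
  ultimately show ?thesis by metis
qed

text \<open>Irreducibility makes the eigenvalue 0 of -L simple: its eigenfunctions are constant,
  hence orthogonal to \<phi>_0 = 1 only if zero.\<close>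

lemma ct_spectral_lam_pos:
  fixes L :: "'a::finite \<Rightarrow> 'a \<Rightarrow> real"
  assumes gen: "generator L" and irr: "irreducible_kernel L" and \<pi>: "pos_prob_vec \<pi>"
    and sp: "ct_spectral L \<pi> lam \<phi>" and i: "1 \<le> i" "i < CARD('a)"
  shows "0 < lam i"
proof (rule ccontr)
  assume "\<not> 0 < lam i"
  moreover have "\<forall>i j. i \<le> j \<and> j < CARD('a) \<longrightarrow> lam i \<le> lam j" "lam 0 = 0"
    using sp unfolding ct_spectral_def by auto
  ultimately have "lam i = 0" using i by (metis le0 order_antisym not_less)
  then have "(\<Sum>y\<in>UNIV. L x y * \<phi> i y) = 0" for x using sp i unfolding ct_spectral_def by auto
  then have const: "\<phi> i x = \<phi> i y" for x y using generator_harmonic_const[OF gen irr] by blast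
  fix x0 :: 'a
  have ortho: "\<forall>i<CARD('a). \<forall>k<CARD('a). (\<Sum>x\<in>UNIV. \<phi> i x * \<phi> k x * \<pi> x) = (if i = k then 1 else 0)"
    and \<phi>0: "\<phi> 0 = (\<lambda>x. 1)" using sp unfolding ct_spectral_def by auto
  have orth: "(\<Sum>x\<in>UNIV. \<phi> 0 x * \<phi> i x * \<pi> x) = 0" "(\<Sum>x\<in>UNIV. \<phi> i x * \<phi> i x * \<pi> x) = 1"
    using ortho[rule_format, OF zero_less_card_finite i(2)] ortho[rule_format, OF i(2) i(2)] i(1)
    by (simp_all del: \<phi>0)
  have "(\<Sum>x\<in>UNIV. \<phi> 0 x * \<phi> i x * \<pi> x) = \<phi> i x0 * (\<Sum>x\<in>UNIV. \<pi> x)"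
    unfolding sum_distrib_left \<phi>0 by (intro sum.cong refl) (metis const mult_1)
  then have "\<phi> i x0 = 0" using orth(1) \<pi> unfolding pos_prob_vec_def by simp
  then have "\<phi> i x = 0" for x using const by metis
  then show False using orth(2) by simp
qed

lemma dt_spectral_abs_le_1:
  fixes K :: "'a::finite \<Rightarrow> 'a \<Rightarrow> real"
  assumes st: "stochastic K" and sp: "dt_spectral K \<pi> \<beta> \<phi>" and i: "i < CARD('a)"
  shows "\<bar>\<beta> i\<bar> \<le> 1"
proof -
  obtain x0 where max: "\<And>y. \<bar>\<phi> i y\<bar> \<le> \<bar>\<phi> i x0\<bar>"
    using finite_fun_attains_max[of "\<lambda>y. \<bar>\<phi> i y\<bar>"] by blast
  have nonzero: "\<phi> i x0 \<noteq> 0"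
  proof
    assume "\<phi> i x0 = 0"
    then have "\<phi> i y = 0" for y using max[of y] by simp
    moreover have "(\<Sum>x\<in>UNIV. \<phi> i x * \<phi> i x * \<pi> x) = 1" using sp i unfolding dt_spectral_def by auto
    ultimately show False by simp
  qed
  have "\<bar>\<beta> i\<bar> * \<bar>\<phi> i x0\<bar> = \<bar>\<Sum>y\<in>UNIV. K x0 y * \<phi> i y\<bar>"
    using sp i unfolding dt_spectral_def by (simp add: abs_mult)
  also have "\<dots> \<le> (\<Sum>y\<in>UNIV. K x0 y * \<bar>\<phi> i x0\<bar>)"
    by (rule order_trans[OF sum_abs])
      (use st max in \<open>auto simp: stochastic_def abs_mult intro!: sum_mono mult_left_mono\<close>)
  also have "\<dots> = \<bar>\<phi> i x0\<bar>" using st unfolding stochastic_def by (simp flip: sum_distrib_right)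
  finally show ?thesis using nonzero by simp
qed

lemma powr_concave_tangent:
  fixes u w p :: real
  assumes "0 \<le> w" "0 < u" "0 < p" "p < 1"
  shows "w powr p \<le> u powr p + p * u powr (p - 1) * (w - u)"
proof (cases "w = 0")
  case True
  have "u powr (p - 1) * u = u powr p" using assms by (simp add: powr_diff)
  moreover have "p * u powr p \<le> u powr p" using assms by (simp add: mult_left_le_one_le)
  ultimately show ?thesis using assms True by (simp add: algebra_simps)
next
  case False
  define x where "x = w / u"
  have x: "0 < x" "w = x * u" using assms False by (auto simp: x_def)
  have "w powr p = x powr p * 1 powr (1 - p) * u powr p" using x by (simp add: powr_mult)
  also have "\<dots> \<le> (p * x + (1 - p) * 1) * u powr p"
    by (rule mult_right_mono[OF Youngs_inequality_0]) (use assms x in auto)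
  also have "\<dots> = u powr p + p * u powr (p - 1) * (w - u)"
    using assms x by (simp add: powr_diff field_simps)
  finally show ?thesis .
qed

lemma powr_secant_bound:
  fixes u w p T :: real
  assumes "0 \<le> w" "w \<le> u" "0 < p" "p < 1" "T * u powr (1 - p) \<le> 1"
  shows "T * (u - w) \<le> (u powr p - w powr p) / p"
proof (cases "u = 0")
  case True then show ?thesis using assms by simp
next
  case False
  then have u: "0 < u" using assms by simp
  have "T * u powr (1 - p) * u powr (p - 1) \<le> u powr (p - 1)"
    using mult_right_mono[OF assms(5) powr_ge_zero] by simp
  then have "T \<le> u powr (p - 1)" using u by (simp add: mult.assoc flip: powr_add)
  then have "T * (u - w) \<le> u powr (p - 1) * (u - w)"
    using assms by (intro mult_right_mono) auto
  also have "\<dots> \<le> (u powr p - w powr p) / p"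
    using powr_concave_tangent[OF assms(1) u assms(3,4)] assms(3) by (simp add: field_simps)
  finally show ?thesis .
qed

text \<open>Abel summation: with a_j = T_j - T_(j-1), the sum \<Sum> a_j u_j telescopes into terms
  T_j (u_j - u_(j+1)), each bounded by the corresponding increment of u^p/p.\<close>

lemma abel_tail_bound:
  fixes a u T :: "nat \<Rightarrow> real" and p :: real
  assumes j0: "1 \<le> j0" "j0 \<le> N"
    and a: "\<And>j. j0 \<le> j \<Longrightarrow> j \<le> N \<Longrightarrow> a j = T j - T (j - 1)"
    and T0: "0 \<le> T (j0 - 1)"
    and u0: "\<And>j. 0 \<le> u j"
    and um: "\<And>j. j0 \<le> j \<Longrightarrow> j < N \<Longrightarrow> u (Suc j) \<le> u j"
    and p: "0 < p" "p < 1"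
    and Tu: "\<And>j. j0 \<le> j \<Longrightarrow> j \<le> N \<Longrightarrow> T j * u j powr (1 - p) \<le> 1"
  shows "(\<Sum>j=j0..N. a j * u j) \<le> u j0 powr p / p"
proof -
  have "(\<Sum>j=k..N. a j * u j) \<le> u k powr p / p - T (k - 1) * u k" if "j0 \<le> k" "k \<le> N" for k
    using that(2,1)
  proof (induction k rule: inc_induct)
    case base
    have "T N * (u N - 0) \<le> (u N powr p - 0 powr p) / p"
      by (rule powr_secant_bound) (use u0 p Tu base j0 in auto)
    moreover have "a N = T N - T (N - 1)" using a[of N] j0 by simp
    ultimately show ?case by (simp add: left_diff_distrib)
  next
    case (step k)
    have "(\<Sum>j=k..N. a j * u j) = a k * u k + (\<Sum>j=Suc k..N. a j * u j)"
      using step.hyps by (simp add: sum.atLeast_Suc_atMost)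
    also have "\<dots> \<le> a k * u k + (u (Suc k) powr p / p - T k * u (Suc k))"
      using step by simp
    also have "\<dots> = T k * (u k - u (Suc k)) + u (Suc k) powr p / p - T (k - 1) * u k"
    proof -
      have ak: "a k = T k - T (k - 1)" using a[of k] step by simp
      show ?thesis unfolding ak by (simp add: algebra_simps)
    qed
    also have "\<dots> \<le> (u k powr p - u (Suc k) powr p) / p + u (Suc k) powr p / p - T (k - 1) * u k"
      using powr_secant_bound[of "u (Suc k)" "u k" p "T k"] u0 um[of k] p Tu[of k] step by auto
    also have "\<dots> = u k powr p / p - T (k - 1) * u k" by (simp add: diff_divide_distrib)
    finally show ?case .
  qed
  then have "(\<Sum>j=j0..N. a j * u j) \<le> u j0 powr p / p - T (j0 - 1) * u j0" using j0 by simp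
  also have "\<dots> \<le> u j0 powr p / p" using T0 u0[of j0] by simp
  finally show ?thesis .
qed

lemma weighted_sum_split_bound:
  fixes a u :: "nat \<Rightarrow> real"
  assumes a0: "\<And>i. 0 \<le> a i" and j0: "1 \<le> j0" "j0 \<le> N"
    and head: "(\<Sum>i=1..j0-1. a i) \<le> c"
    and u0: "\<And>j. 0 \<le> u j" and u1: "\<And>i. 1 \<le> i \<Longrightarrow> i < j0 \<Longrightarrow> u i \<le> 1"
    and um: "\<And>j. j0 \<le> j \<Longrightarrow> j < N \<Longrightarrow> u (Suc j) \<le> u j"
    and p: "0 < p" "p < 1"
    and Su: "\<And>j. j0 \<le> j \<Longrightarrow> j \<le> N \<Longrightarrow> (1 + (\<Sum>i=1..j. a i)) * u j powr (1 - p) \<le> 1"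
  shows "(\<Sum>i=1..N. a i * u i) \<le> c + u j0 powr p / p"
proof -
  have "{1..N} = {1..j0-1} \<union> {j0..N}" using j0 by auto
  then have "(\<Sum>i=1..N. a i * u i) = (\<Sum>i=1..j0-1. a i * u i) + (\<Sum>i=j0..N. a i * u i)"
    by (simp add: sum.union_disjoint)
  also have "(\<Sum>i=1..j0-1. a i * u i) \<le> (\<Sum>i=1..j0-1. a i)"
    by (rule sum_mono) (use u1 j0 a0 in \<open>auto intro: mult_left_le\<close>)
  also have "(\<Sum>i=j0..N. a i * u i) \<le> u j0 powr p / p"
  proof (rule abel_tail_bound[where T="\<lambda>j. 1 + (\<Sum>i=1..j. a i)"])
    show "a j = (1 + sum a {1..j}) - (1 + sum a {1..j - 1})" if "j0 \<le> j" for j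
      using that j0 by (cases j) (auto simp: atLeastAtMostSuc_conv)
    show "0 \<le> 1 + sum a {1..j0 - 1}" using a0 by (simp add: sum_nonneg add_nonneg_nonneg)
  qed (use j0 u0 um p Su in auto)
  finally show ?thesis using head by simp
qed

lemma decreasing_weight_bound:
  fixes a w :: "nat \<Rightarrow> real"
  assumes a0: "\<And>i. 0 \<le> a i" and j: "1 \<le> j" "j \<le> N"
    and w0: "\<And>i. 1 \<le> i \<Longrightarrow> i \<le> N \<Longrightarrow> 0 \<le> w i"
    and wm: "\<And>i. 1 \<le> i \<Longrightarrow> i \<le> j \<Longrightarrow> w j \<le> w i"
    and c: "0 < c" "c < (\<Sum>i=1..j. a i)"
    and sum: "(\<Sum>i=1..N. w i * a i) \<le> c / (1 + c)"
  shows "w j * (1 + (\<Sum>i=1..j. a i)) < 1"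
proof -
  define S where "S = (\<Sum>i=1..j. a i)"
  have "w j * S = (\<Sum>i=1..j. w j * a i)" unfolding S_def by (simp add: sum_distrib_left)
  also have "\<dots> \<le> (\<Sum>i=1..j. w i * a i)"
    by (rule sum_mono) (use wm a0 in \<open>auto intro: mult_right_mono\<close>)
  also have "\<dots> \<le> (\<Sum>i=1..N. w i * a i)"
    by (rule sum_mono2) (use j w0 a0 in auto)
  also have "\<dots> \<le> c / (1 + c)" by (rule sum)
  also have "\<dots> < S / (1 + S)" using c by (simp add: S_def field_simps)
  finally have "w j * S * (1 + S) < S" using c by (simp add: S_def less_divide_eq add_pos_pos)
  then have "(w j * (1 + S)) * S < 1 * S" by (simp add: algebra_simps)
  then show ?thesis using c unfolding S_def[symmetric] by (simp add: mult_less_cancel_right)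
qed

text \<open>With p = A/(\<alpha>+A), the hypotheses on u say (1 + a_1 + ... + a_j) u_j^(1-p) \<le> 1 for
  j \<ge> j0, and u_j0^p \<le> e^(-2\<alpha>A).\<close>

lemma weighted_sum_profile_bound:
  fixes a u :: "nat \<Rightarrow> real"
  assumes a0: "\<And>i. 0 \<le> a i" and j0: "1 \<le> j0" "j0 \<le> N"
    and head: "(\<Sum>i=1..j0-1. a i) \<le> c"
    and u0: "\<And>j. 0 \<le> u j" and u1: "\<And>i. 1 \<le> i \<Longrightarrow> i < j0 \<Longrightarrow> u i \<le> 1"
    and um: "\<And>j. j0 \<le> j \<Longrightarrow> j < N \<Longrightarrow> u (Suc j) \<le> u j"
    and \<alpha>: "0 < \<alpha>" and A: "0 < A"
    and tail: "\<And>j. j0 \<le> j \<Longrightarrow> j \<le> N \<Longrightarrow> u j \<le> (1 + (\<Sum>i=1..j. a i)) powr (- ((\<alpha> + A) / \<alpha>))"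
    and start: "u j0 \<le> exp (- 2 * \<alpha> * (\<alpha> + A))"
  shows "(\<Sum>i=1..N. a i * u i) \<le> c + (A + \<alpha>) / (A * exp (\<alpha> * A))"
proof -
  define p where "p = A / (\<alpha> + A)"
  have p: "0 < p" "p < 1" unfolding p_def using \<alpha> A by auto
  have nz: "\<alpha> + A \<noteq> 0" using \<alpha> A by simp
  have "1 - p = \<alpha> / (\<alpha> + A)" unfolding p_def using nz by (simp add: field_simps)
  then have exponent: "- ((\<alpha> + A) / \<alpha>) * (1 - p) = -1" using \<alpha> nz by (simp add: field_simps)
  have "(\<Sum>i=1..N. a i * u i) \<le> c + u j0 powr p / p"
  proof (rule weighted_sum_split_bound[where a=a and u=u, OF a0 j0 head u0 u1 um p])
    fix j assume j: "j0 \<le> j" "j \<le> N"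
    define S where "S = 1 + (\<Sum>i=1..j. a i)"
    have S: "1 \<le> S" unfolding S_def using a0 by (simp add: sum_nonneg)
    have "u j powr (1 - p) \<le> (S powr (- ((\<alpha> + A) / \<alpha>))) powr (1 - p)"
      using tail[OF j] u0[of j] p by (intro powr_mono2) (auto simp: S_def)
    also have "\<dots> = 1 / S" using S by (simp only: powr_powr exponent) (simp add: powr_minus_divide)
    finally show "S * u j powr (1 - p) \<le> 1" using S by (simp add: field_simps)
  qed
  also have "u j0 powr p / p \<le> exp (- 2 * \<alpha> * (\<alpha> + A)) powr p / p"
    using start u0[of j0] p by (intro divide_right_mono powr_mono2) auto
  also have "\<dots> = exp (- 2 * (\<alpha> * A)) * ((A + \<alpha>) / A)"
  proof -
    have "(\<alpha> + A) * p = A" unfolding p_def using nz by simp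
    then have "- 2 * \<alpha> * (\<alpha> + A) * p = - 2 * (\<alpha> * A)" by (simp only: mult.assoc)
    moreover have "1 / p = (A + \<alpha>) / A" unfolding p_def by (simp add: add.commute)
    ultimately show ?thesis unfolding exp_powr_real by (metis divide_inverse inverse_eq_divide)
  qed
  also have "\<dots> \<le> exp (- (\<alpha> * A)) * ((A + \<alpha>) / A)"
    using \<alpha> A by (intro mult_right_mono) auto
  also have "\<dots> = (A + \<alpha>) / (A * exp (\<alpha> * A))" by (simp add: exp_minus field_simps)
  finally show ?thesis by simp
qed

lemma exp_le_powr_of_ln_le:
  fixes S \<tau> l q :: real
  assumes "0 \<le> S" "ln (1 + S) \<le> 2 * \<tau> * l" "0 < q"
  shows "exp (- 2 * (\<tau> * q) * l) \<le> (1 + S) powr (- q)"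
proof -
  have "q * ln (1 + S) \<le> q * (2 * \<tau> * l)" using assms by (intro mult_left_mono) auto
  then show ?thesis using assms(1) by (simp add: powr_def algebra_simps)
qed

lemma ln_one_plus_ge_ratio: "0 \<le> (y::real) \<Longrightarrow> y / (1 + y) \<le> ln (1 + y)"
  using ln_le_minus_one[of "1 / (1 + y)"] by (simp add: ln_div field_simps)

lemma eps_choice_poly_ineq:
  fixes z :: real
  assumes "2 \<le> z"
  shows "12 * z^3 * (8*z + 4)^2 \<le> (6*z^2 - 1) * (6*z^2 + 8*z + 3)^2"
proof -
  define s where "s = z - 2"
  have "(6*z^2 - 1) * (6*z^2 + 8*z + 3)^2 - 12 * z^3 * (8*z + 4)^2
      = 4127 + 19352 * s + 31538 * s^2 + 25248 * s^3 + 10836 * s^4 + 2400 * s^5 + 216 * s^6"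
    unfolding s_def by algebra
  also have "\<dots> \<ge> 0" using assms unfolding s_def by (intro add_nonneg_nonneg) auto
  finally show ?thesis by simp
qed

lemma eps_choice_exp_ineq:
  fixes z :: real
  assumes z: "2 < z"
  shows "12 * z^3 \<le> (6*z^2 - 1) * exp ((6*z^2 - 1) / (4*z + 2))"
proof -
  define k where "k = 6*z^2 - 1"
  have "2^2 < z^2" by (rule power_strict_mono) (use z in auto)
  then have k: "0 < k" unfolding k_def by simp
  define w where "w = k / (4*z + 2)"
  have "1 + w / 2 = (6*z^2 + 8*z + 3) / (8*z + 4)"
    using z unfolding w_def k_def by (simp add: field_simps)
  moreover have "0 < (8*z + 4)^2" using z by simp
  ultimately have "12 * z^3 \<le> k * (1 + w / 2)^2"
    using eps_choice_poly_ineq[of z] z unfolding k_def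
    by (simp add: power_divide pos_le_divide_eq mult.commute mult.left_commute)
  also have "\<dots> \<le> k * exp (w / 2)^2"
    using k z unfolding w_def by (intro mult_left_mono power_mono) (auto intro: exp_ge_add_one_self)
  also have "\<dots> = k * exp w" by (simp flip: exp_double)
  finally show ?thesis unfolding w_def k_def .
qed

text \<open>The choice of A behind T_2(\<mu>,\<epsilon>) \<le> 6\<epsilon>^(-4) \<tau>(\<epsilon>^2/2): with z = \<epsilon>^(-2), the lower bound
  2\<alpha>^2 \<ge> ln (1 + \<epsilon>^2/2) \<ge> 1/(2z+1) makes \<alpha>A large enough for the error term
  (A+\<alpha>)/(A e^(\<alpha>A)) to fall below \<epsilon>^2/2.\<close>

lemma eps_choice:
  fixes \<epsilon> \<alpha> :: real
  assumes \<epsilon>: "0 < \<epsilon>" "\<epsilon>\<^sup>2 < 1/2" and \<alpha>: "0 < \<alpha>" "ln (1 + \<epsilon>\<^sup>2 / 2) \<le> 2 * \<alpha>\<^sup>2"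
  defines "A \<equiv> (6 / \<epsilon> ^ 4 - 1) * \<alpha>"
  shows "0 < A" "(\<alpha> + A) / \<alpha> = 6 / \<epsilon> ^ 4"
    "sqrt (\<epsilon>\<^sup>2 / 2 + (A + \<alpha>) / (A * exp (\<alpha> * A))) \<le> \<epsilon>"
proof -
  define z where "z = 1 / \<epsilon>\<^sup>2"
  define k where "k = 6 * z^2 - 1"
  have z: "2 < z" and \<epsilon>2: "\<epsilon>\<^sup>2 = 1 / z" using \<epsilon> by (simp_all add: z_def field_simps)
  have "6 / \<epsilon> ^ 4 = 6 * z^2" unfolding z_def
    by (simp add: power_divide field_simps flip: power_mult)
  moreover have "2^2 < z^2" by (rule power_strict_mono) (use z in auto)
  ultimately have A_eq: "A = k * \<alpha>" and k: "1 < k" unfolding A_def k_def by auto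
  show "0 < A" using k \<alpha> A_eq by simp
  show "(\<alpha> + A) / \<alpha> = 6 / \<epsilon> ^ 4"
    using \<alpha> \<open>6 / \<epsilon> ^ 4 = 6 * z^2\<close> unfolding A_eq k_def by (simp add: field_simps)
  have "1 / (2 * z + 1) \<le> ln (1 + 1 / (2 * z))"
    using ln_one_plus_ge_ratio[of "1 / (2 * z)"] z by (simp add: field_simps)
  also have "\<dots> \<le> 2 * \<alpha>\<^sup>2" using \<alpha>(2) by (simp add: \<epsilon>2 mult.commute)
  finally have "1 \<le> 2 * \<alpha>\<^sup>2 * (2 * z + 1)" using z by (simp add: field_simps)
  then have "k \<le> k * (2 * \<alpha>\<^sup>2 * (2 * z + 1))" using k by simp
  then have "k / (4 * z + 2) \<le> \<alpha> * A"
    using z unfolding A_eq by (simp add: divide_le_eq power2_eq_square algebra_simps)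
  then have "12 * z^3 \<le> k * exp (\<alpha> * A)"
    using eps_choice_exp_ineq[OF z] k unfolding k_def
      by (smt (verit) exp_le_cancel_iff mult_left_mono)
  then have "(k + 1) / (k * exp (\<alpha> * A)) \<le> 1 / (2 * z)"
    using k z unfolding k_def by (simp add: field_simps power2_eq_square power3_eq_cube)
  moreover have "(A + \<alpha>) / (A * exp (\<alpha> * A)) = (\<alpha> * (k + 1)) / (\<alpha> * (k * exp (\<alpha> * A)))"
    unfolding A_eq by (simp add: algebra_simps)
  then have "(A + \<alpha>) / (A * exp (\<alpha> * A)) = (k + 1) / (k * exp (\<alpha> * A))" using \<alpha> by simp
  ultimately have "\<epsilon>\<^sup>2 / 2 + (A + \<alpha>) / (A * exp (\<alpha> * A)) \<le> \<epsilon>\<^sup>2" unfolding \<epsilon>2 by simp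
  then show "sqrt (\<epsilon>\<^sup>2 / 2 + (A + \<alpha>) / (A * exp (\<alpha> * A))) \<le> \<epsilon>"
    using \<epsilon> real_sqrt_le_mono by fastforce
qed

lemma eps_range:
  fixes \<epsilon> P :: real
  assumes "0 < \<epsilon>" "\<epsilon> < sqrt (min P 1 / 2)"
  shows "\<epsilon>\<^sup>2 < 1/2" "2 * \<epsilon>\<^sup>2 < P"
proof -
  have "0 < sqrt (min P 1 / 2)" using assms by linarith
  then have "\<epsilon>\<^sup>2 < (sqrt (min P 1 / 2))\<^sup>2" using assms by (intro power_strict_mono) auto
  then have "\<epsilon>\<^sup>2 < min P 1 / 2" using \<open>0 < sqrt (min P 1 / 2)\<close> by simp
  then show "\<epsilon>\<^sup>2 < 1/2" "2 * \<epsilon>\<^sup>2 < P" by auto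
qed

lemma le_sqrt_two_eps:
  fixes \<epsilon> :: real
  assumes "0 < \<epsilon>" "\<epsilon>\<^sup>2 < 1/2"
  shows "\<epsilon> \<le> sqrt (2 * \<epsilon>\<^sup>2 / (1 + 2 * \<epsilon>\<^sup>2))"
proof -
  have "\<epsilon>\<^sup>2 * (1 + 2 * \<epsilon>\<^sup>2) \<le> \<epsilon>\<^sup>2 * 2" using assms by (intro mult_left_mono) auto
  then have "\<epsilon>\<^sup>2 \<le> 2 * \<epsilon>\<^sup>2 / (1 + 2 * \<epsilon>\<^sup>2)"
    using assms by (subst pos_le_divide_eq) (auto simp: add_pos_pos mult.commute)
  then show ?thesis using assms real_sqrt_le_mono by fastforce
qed

locale ct_chain =
  fixes L :: "'a::finite \<Rightarrow> 'a \<Rightarrow> real" and \<pi> \<mu> :: "'a \<Rightarrow> real"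
    and lam :: "nat \<Rightarrow> real" and \<phi> :: "nat \<Rightarrow> 'a \<Rightarrow> real"
  assumes gen: "generator L" and irr: "irreducible_kernel L" and \<pi>: "pos_prob_vec \<pi>"
    and rev: "reversible L \<pi>" and \<mu>: "prob_vec \<mu>" and sp: "ct_spectral L \<pi> lam \<phi>"
begin

definition d2_sq :: "real \<Rightarrow> real" where
  "d2_sq t = (\<Sum>i=1..CARD('a) - 1. exp (- 2 * t * lam i) * (mu_of \<mu> (\<phi> i))\<^sup>2)"

lemma orthonormal: "pi_orthonormal \<pi> \<phi>"
  using \<pi> sp unfolding pi_orthonormal_def pos_prob_vec_def ct_spectral_def by auto

lemma lam_mono: "i \<le> j \<Longrightarrow> j \<le> CARD('a) - 1 \<Longrightarrow> lam i \<le> lam j"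
  using sp zero_less_card_finite[where 'a='a] unfolding ct_spectral_def
  by (metis One_nat_def Suc_pred le_imp_less_Suc)

lemma lam_pos: "1 \<le> i \<Longrightarrow> i \<le> CARD('a) - 1 \<Longrightarrow> 0 < lam i"
  by (rule ct_spectral_lam_pos[OF gen irr \<pi> sp]) (use zero_less_card_finite[where 'a='a] in auto)

lemma lam_nonneg: "i \<le> CARD('a) - 1 \<Longrightarrow> 0 \<le> lam i"
  using lam_mono[of 0 i] sp unfolding ct_spectral_def by simp

lemma pi_sq_eq: "pi_sq \<pi> (\<lambda>y. \<mu> y / \<pi> y) - 1 = spec_sum \<mu> \<phi> (CARD('a) - 1)"
  using pi_sq_density_eq_spec_sum[OF orthonormal _ \<mu>] sp unfolding ct_spectral_def by auto

lemma d2_ct_eq: "d2_ct L \<pi> \<mu> t = sqrt (d2_sq t)"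
proof -
  have "d2_ct L \<pi> \<mu> t = sqrt (\<Sum>i=1..CARD('a) - 1. (exp (- t * lam i))\<^sup>2 * (mu_of \<mu> (\<phi> i))\<^sup>2)"
    unfolding d2_ct_def
  proof (rule l2norm_density_spectral[OF orthonormal _ \<mu>])
    have eig: "\<And>i x. i < CARD('a) \<Longrightarrow> (\<Sum>y\<in>UNIV. L x y * \<phi> i y) = - lam i * \<phi> i x"
      using sp unfolding ct_spectral_def by auto
    show "heat L t x y = (\<Sum>i<CARD('a). exp (- t * lam i) * \<phi> i x * \<phi> i y * \<pi> y)" for x y
      by (rule heat_spectral[OF orthonormal rev eig])
  qed (use sp in \<open>auto simp: ct_spectral_def\<close>)
  then show ?thesis unfolding d2_sq_def by (simp add: mult.assoc flip: exp_double)
qed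

lemma d2_ct_le_iff: "0 \<le> \<theta> \<Longrightarrow> d2_ct L \<pi> \<mu> t \<le> \<theta> \<longleftrightarrow> d2_sq t \<le> \<theta>\<^sup>2"
  unfolding d2_ct_eq by (metis abs_of_nonneg real_sqrt_abs real_sqrt_le_iff)

lemma T2_ct_le:
  assumes "0 \<le> t" "0 \<le> \<theta>" "d2_sq t \<le> \<theta>\<^sup>2"
  shows "T2_ct L \<pi> \<mu> \<theta> \<le> t"
  unfolding T2_ct_def using assms d2_ct_le_iff by (intro cInf_lower bdd_belowI[of _ 0]) auto

lemma d2_sq_eventually_le:
  assumes \<theta>: "0 < \<theta>" and N: "1 \<le> CARD('a) - 1"
  obtains t where "0 \<le> t" "d2_sq t \<le> \<theta>\<^sup>2"
proof
  define S where "S = spec_sum \<mu> \<phi> (CARD('a) - 1)"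
  have S0: "0 \<le> S" unfolding S_def by (rule spec_sum_nonneg)
  have l1: "0 < lam 1" using lam_pos[of 1] N by simp
  define t where "t = S / (2 * lam 1 * \<theta>\<^sup>2)"
  show t0: "0 \<le> t" unfolding t_def using S0 l1 \<theta> by simp
  have "d2_sq t \<le> (\<Sum>i=1..CARD('a) - 1. exp (- 2 * t * lam 1) * (mu_of \<mu> (\<phi> i))\<^sup>2)"
    unfolding d2_sq_def
    by (intro sum_mono mult_right_mono) (use lam_mono t0 in \<open>auto simp: mult_left_mono\<close>)
  also have "\<dots> = S / exp (2 * t * lam 1)"
    unfolding S_def spec_sum_def
      by (simp add: exp_minus divide_inverse mult.commute sum_distrib_left)
  also have "\<dots> \<le> S / (1 + S / \<theta>\<^sup>2)"
  proof (rule divide_left_mono)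
    have "2 * t * lam 1 = S / \<theta>\<^sup>2" unfolding t_def using l1 by simp
    then show "1 + S / \<theta>\<^sup>2 \<le> exp (2 * t * lam 1)" by (metis exp_ge_add_one_self add.commute)
  qed (use S0 \<theta> in \<open>auto simp: add_pos_nonneg\<close>)
  also have "\<dots> = S * \<theta>\<^sup>2 / (\<theta>\<^sup>2 + S)" using \<theta> by (simp add: field_simps)
  also have "\<dots> \<le> \<theta>\<^sup>2"
    using S0 \<theta> by (simp add: divide_le_eq add_pos_nonneg mult.commute mult_left_mono)
  finally show "d2_sq t \<le> \<theta>\<^sup>2" .
qed

lemma T2_ct_ge:
  assumes "0 < \<theta>" "1 \<le> CARD('a) - 1"
    and "\<And>t. 0 \<le> t \<Longrightarrow> d2_sq t \<le> \<theta>\<^sup>2 \<Longrightarrow> x \<le> t"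
  shows "x \<le> T2_ct L \<pi> \<mu> \<theta>"
proof -
  obtain t0 where "0 \<le> t0" "d2_sq t0 \<le> \<theta>\<^sup>2" using d2_sq_eventually_le[OF assms(1,2)] .
  then have "t0 \<in> {t. 0 \<le> t \<and> d2_ct L \<pi> \<mu> t \<le> \<theta>}" using assms(1) d2_ct_le_iff by simp
  moreover have "x \<le> t" if "0 \<le> t" "d2_ct L \<pi> \<mu> t \<le> \<theta>" for t
    using assms(1,3) d2_ct_le_iff that by simp
  ultimately show ?thesis unfolding T2_ct_def by (intro cInf_greatest) auto
qed

lemma T2_ct_antimono:
  assumes "0 < \<theta>1" "\<theta>1 \<le> \<theta>2" "1 \<le> CARD('a) - 1"
  shows "T2_ct L \<pi> \<mu> \<theta>2 \<le> T2_ct L \<pi> \<mu> \<theta>1"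
  using assms by (intro T2_ct_ge T2_ct_le) (auto intro: order_trans power_mono)

lemma ln_spec_sum_le_tau_ct:
  assumes c: "0 < c" "c < spec_sum \<mu> \<phi> (CARD('a) - 1)"
    and j: "jc \<mu> \<phi> c \<le> j" "j \<le> CARD('a) - 1"
  shows "ln (1 + spec_sum \<mu> \<phi> j) \<le> 2 * tau_ct \<mu> lam \<phi> c * lam j"
proof -
  have "ln (1 + spec_sum \<mu> \<phi> j) / (2 * lam j) \<le> tau_ct \<mu> lam \<phi> c"
    unfolding tau_ct_def using j le_card_minus_one_iff[of j] by (intro Max_ge imageI) auto
  then show ?thesis using lam_pos[of j] jc_bounds(1)[OF c] j by (simp add: pos_divide_le_eq mult_ac)
qed

lemma tau_ct_leI:
  assumes c: "0 < c" "c < spec_sum \<mu> \<phi> (CARD('a) - 1)"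
    and le: "\<And>j. jc \<mu> \<phi> c \<le> j \<Longrightarrow> j \<le> CARD('a) - 1 \<Longrightarrow> ln (1 + spec_sum \<mu> \<phi> j) \<le> 2 * x * lam j"
  shows "tau_ct \<mu> lam \<phi> c \<le> x"
  unfolding tau_ct_def
proof (rule Max.boundedI)
  show "(\<lambda>j. ln (1 + spec_sum \<mu> \<phi> j) / (2 * lam j)) ` {jc \<mu> \<phi> c..<CARD('a)} \<noteq> {}"
    using jc_bounds(2)[OF c] le_card_minus_one_iff[where 'a='a] by simp
next
  fix y assume "y \<in> (\<lambda>j. ln (1 + spec_sum \<mu> \<phi> j) / (2 * lam j)) ` {jc \<mu> \<phi> c..<CARD('a)}"
  then obtain j where j: "jc \<mu> \<phi> c \<le> j" "j \<le> CARD('a) - 1"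
    and y: "y = ln (1 + spec_sum \<mu> \<phi> j) / (2 * lam j)" by auto
  show "y \<le> x" using le[OF j] lam_pos[of j] jc_bounds(1)[OF c] j unfolding y
    by (simp add: pos_divide_le_eq mult_ac)
qed simp

lemma alpha_ct_bounds:
  assumes c: "0 < c" "c < spec_sum \<mu> \<phi> (CARD('a) - 1)"
  shows "(alpha_ct \<mu> lam \<phi> c)\<^sup>2 = tau_ct \<mu> lam \<phi> c * lam (jc \<mu> \<phi> c)"
    and "0 < alpha_ct \<mu> lam \<phi> c" "ln (1 + c) \<le> 2 * (alpha_ct \<mu> lam \<phi> c)\<^sup>2"
proof -
  have "ln (1 + c) < ln (1 + spec_sum \<mu> \<phi> (jc \<mu> \<phi> c))" using jc_bounds(3)[OF c] c by simp
  also have "\<dots> \<le> 2 * tau_ct \<mu> lam \<phi> c * lam (jc \<mu> \<phi> c)"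
    using ln_spec_sum_le_tau_ct[OF c] jc_bounds(2)[OF c] by simp
  finally have "ln (1 + c) < 2 * (tau_ct \<mu> lam \<phi> c * lam (jc \<mu> \<phi> c))" by simp
  moreover have "0 < ln (1 + c)" using c by simp
  ultimately show "(alpha_ct \<mu> lam \<phi> c)\<^sup>2 = tau_ct \<mu> lam \<phi> c * lam (jc \<mu> \<phi> c)"
    "0 < alpha_ct \<mu> lam \<phi> c" "ln (1 + c) \<le> 2 * (alpha_ct \<mu> lam \<phi> c)\<^sup>2"
    unfolding alpha_ct_def by auto
qed

lemma tau_ct_le_T2:
  assumes c: "0 < c" "c < spec_sum \<mu> \<phi> (CARD('a) - 1)"
  shows "tau_ct \<mu> lam \<phi> c \<le> T2_ct L \<pi> \<mu> (sqrt (c / (1 + c)))"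
proof (rule T2_ct_ge)
  fix t assume t: "0 \<le> t" "d2_sq t \<le> (sqrt (c / (1 + c)))\<^sup>2"
  show "tau_ct \<mu> lam \<phi> c \<le> t"
  proof (rule tau_ct_leI[OF c])
    fix j assume j: "jc \<mu> \<phi> c \<le> j" "j \<le> CARD('a) - 1"
    have "exp (- 2 * t * lam j) * (1 + (\<Sum>i=1..j. (mu_of \<mu> (\<phi> i))\<^sup>2)) < 1"
    proof (rule decreasing_weight_bound[where N = "CARD('a) - 1"])
      show "1 \<le> j" using j jc_bounds[OF c] by simp
      show "exp (- 2 * t * lam j) \<le> exp (- 2 * t * lam i)" if "1 \<le> i" "i \<le> j" for i
        using lam_mono[of i j] that j t(1) by (simp add: mult_left_mono)
      show "c < (\<Sum>i=1..j. (mu_of \<mu> (\<phi> i))\<^sup>2)"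
        using jc_bounds(3)[OF c] spec_sum_mono[OF j(1), of \<mu> \<phi>] unfolding spec_sum_def by simp
      show "(\<Sum>i=1..CARD('a) - 1. exp (- 2 * t * lam i) * (mu_of \<mu> (\<phi> i))\<^sup>2) \<le> c / (1 + c)"
        using t c unfolding d2_sq_def by simp
    qed (use j c in auto)
    then have "1 + spec_sum \<mu> \<phi> j \<le> exp (2 * t * lam j)"
      unfolding spec_sum_def by (simp add: exp_minus field_simps)
    then show "ln (1 + spec_sum \<mu> \<phi> j) \<le> 2 * t * lam j"
      using ln_le_cancel_iff[of "1 + spec_sum \<mu> \<phi> j" "exp (2 * t * lam j)"]
        spec_sum_nonneg[of \<mu> \<phi> j]
      by simp
  qed
qed (use c jc_bounds[OF c] in auto)

text \<open>At time s = \<tau>(c)(\<alpha>+A)/\<alpha> the definition of \<tau>(c) supplies the tail hypothesis of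
  weighted_sum_profile_bound, and \<alpha>^2 = \<tau>(c) \<lambda>_j(c) its starting value.\<close>

lemma T2_ct_le_scaled_tau:
  assumes c: "0 < c" "c < spec_sum \<mu> \<phi> (CARD('a) - 1)" and A: "0 < A"
  defines "\<alpha> \<equiv> alpha_ct \<mu> lam \<phi> c"
  shows "T2_ct L \<pi> \<mu> (sqrt (c + (A + \<alpha>) / (A * exp (\<alpha> * A)))) \<le> tau_ct \<mu> lam \<phi> c * (\<alpha> + A) / \<alpha>"
proof -
  define \<tau> where "\<tau> = tau_ct \<mu> lam \<phi> c"
  define j0 where "j0 = jc \<mu> \<phi> c"
  define s where "s = \<tau> * ((\<alpha> + A) / \<alpha>)"
  have j0: "1 \<le> j0" "j0 \<le> CARD('a) - 1" using jc_bounds[OF c] unfolding j0_def by auto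
  have \<alpha>: "0 < \<alpha>" "\<alpha>\<^sup>2 = \<tau> * lam j0"
    using alpha_ct_bounds[OF c] unfolding \<alpha>_def \<tau>_def j0_def by auto
  have "0 < \<tau>" using \<alpha> lam_pos[OF j0] by (metis zero_less_mult_pos2 zero_less_power2 less_irrefl)
  then have s0: "0 \<le> s" unfolding s_def using \<alpha> A by simp
  have "(\<Sum>i=1..CARD('a) - 1. (mu_of \<mu> (\<phi> i))\<^sup>2 * exp (- 2 * s * lam i))
      \<le> c + (A + \<alpha>) / (A * exp (\<alpha> * A))"
  proof (rule weighted_sum_profile_bound[OF _ j0 _ _ _ _ \<alpha>(1) A])
    show "(\<Sum>i=1..j0-1. (mu_of \<mu> (\<phi> i))\<^sup>2) \<le> c"
      using jc_bounds(4)[OF c] unfolding j0_def spec_sum_def .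
    show "exp (- 2 * s * lam i) \<le> 1" if "1 \<le> i" "i < j0" for i
      using lam_nonneg[of i] that j0 s0 by simp
    show "exp (- 2 * s * lam (Suc j)) \<le> exp (- 2 * s * lam j)" if "j0 \<le> j" "j < CARD('a) - 1" for j
      using lam_mono[of j "Suc j"] that s0 by (simp add: mult_left_mono)
    show "exp (- 2 * s * lam j) \<le> (1 + (\<Sum>i=1..j. (mu_of \<mu> (\<phi> i))\<^sup>2)) powr (- ((\<alpha> + A) / \<alpha>))"
      if "j0 \<le> j" "j \<le> CARD('a) - 1" for j
      unfolding s_def
      by (rule exp_le_powr_of_ln_le)
        (use ln_spec_sum_le_tau_ct[OF c] that \<alpha> A
          in \<open>auto simp: \<tau>_def j0_def spec_sum_def intro: sum_nonneg\<close>)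
    have "s * lam j0 = \<alpha> * (\<alpha> + A)"
      using \<alpha> unfolding s_def by (simp add: power2_eq_square field_simps)
    then show "exp (- 2 * s * lam j0) \<le> exp (- 2 * \<alpha> * (\<alpha> + A))" by (simp add: mult.assoc)
  qed auto
  then have "d2_sq s \<le> (sqrt (c + (A + \<alpha>) / (A * exp (\<alpha> * A))))\<^sup>2"
    using c A \<alpha> unfolding d2_sq_def by (simp add: mult.commute)
  then show ?thesis
    using T2_ct_le[OF s0] c A \<alpha> unfolding s_def \<tau>_def by (simp add: mult.assoc)
qed

lemma mixing_time_bounds:
  assumes c: "0 < c" "c < pi_sq \<pi> (\<lambda>y. \<mu> y / \<pi> y) - 1" and A: "0 < A"
  shows "let \<alpha> = alpha_ct \<mu> lam \<phi> c in
           \<alpha> / (\<alpha> + A) * T2_ct L \<pi> \<mu> (sqrt (c + (A + \<alpha>) / (A * exp (\<alpha> * A))))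
             \<le> tau_ct \<mu> lam \<phi> c
           \<and> tau_ct \<mu> lam \<phi> c \<le> T2_ct L \<pi> \<mu> (sqrt (c / (1 + c)))"
proof -
  note c' = c[unfolded pi_sq_eq]
  define \<alpha> where "\<alpha> = alpha_ct \<mu> lam \<phi> c"
  have \<alpha>: "0 < \<alpha>" using alpha_ct_bounds(2)[OF c'] unfolding \<alpha>_def .
  have "\<alpha> / (\<alpha> + A) * T2_ct L \<pi> \<mu> (sqrt (c + (A + \<alpha>) / (A * exp (\<alpha> * A))))
      \<le> \<alpha> / (\<alpha> + A) * (tau_ct \<mu> lam \<phi> c * (\<alpha> + A) / \<alpha>)"
    using T2_ct_le_scaled_tau[OF c' A, folded \<alpha>_def] \<alpha> A by (intro mult_left_mono) auto
  also have "\<dots> = tau_ct \<mu> lam \<phi> c" using \<alpha> A by simp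
  finally show ?thesis using tau_ct_le_T2[OF c'] unfolding \<alpha>_def Let_def by simp
qed

lemma T2_ct_le_eps_tau:
  assumes \<epsilon>: "0 < \<epsilon>" "\<epsilon>\<^sup>2 < 1/2" and P: "2 * \<epsilon>\<^sup>2 < spec_sum \<mu> \<phi> (CARD('a) - 1)"
  shows "T2_ct L \<pi> \<mu> \<epsilon> \<le> 6 / \<epsilon> ^ 4 * tau_ct \<mu> lam \<phi> (\<epsilon>\<^sup>2 / 2)"
proof -
  define c where "c = \<epsilon>\<^sup>2 / 2"
  have "0 < \<epsilon>\<^sup>2" using \<epsilon>(1) by simp
  then have c: "0 < c" "c < spec_sum \<mu> \<phi> (CARD('a) - 1)" using P unfolding c_def by linarith+
  define \<alpha> where "\<alpha> = alpha_ct \<mu> lam \<phi> c"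
  define A where "A = (6 / \<epsilon> ^ 4 - 1) * \<alpha>"
  have \<alpha>: "0 < \<alpha>" "ln (1 + \<epsilon>\<^sup>2 / 2) \<le> 2 * \<alpha>\<^sup>2"
    using alpha_ct_bounds(2,3)[OF c] unfolding \<alpha>_def c_def by auto
  note choice = eps_choice[OF \<epsilon> \<alpha>, folded A_def]
  have "0 < c + (A + \<alpha>) / (A * exp (\<alpha> * A))" using c(1) choice(1) \<alpha>(1) by (simp add: add_pos_nonneg)
  then have "T2_ct L \<pi> \<mu> \<epsilon> \<le> T2_ct L \<pi> \<mu> (sqrt (c + (A + \<alpha>) / (A * exp (\<alpha> * A))))"
    using choice(3) jc_bounds[OF c] unfolding c_def by (intro T2_ct_antimono) auto
  also have "\<dots> \<le> tau_ct \<mu> lam \<phi> c * ((\<alpha> + A) / \<alpha>)"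
    using T2_ct_le_scaled_tau[OF c choice(1)] unfolding \<alpha>_def by simp
  finally show ?thesis unfolding choice(2) c_def by (simp add: mult.commute)
qed

lemma mixing_time_eps_bounds:
  assumes \<epsilon>: "0 < \<epsilon>" "\<epsilon> < sqrt (min (pi_sq \<pi> (\<lambda>y. \<mu> y / \<pi> y - 1)) 1 / 2)"
  shows "tau_ct \<mu> lam \<phi> (2 * \<epsilon>\<^sup>2) \<le> T2_ct L \<pi> \<mu> \<epsilon>
    \<and> T2_ct L \<pi> \<mu> \<epsilon> \<le> 6 / \<epsilon> ^ 4 * tau_ct \<mu> lam \<phi> (\<epsilon>\<^sup>2 / 2)"
proof
  have e: "\<epsilon>\<^sup>2 < 1/2" "2 * \<epsilon>\<^sup>2 < spec_sum \<mu> \<phi> (CARD('a) - 1)"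
    using eps_range[OF \<epsilon>[unfolded pi_sq_centered[OF \<pi> \<mu>] pi_sq_eq]] by auto
  have c: "0 < 2 * \<epsilon>\<^sup>2" using \<epsilon> by simp
  have "tau_ct \<mu> lam \<phi> (2 * \<epsilon>\<^sup>2) \<le> T2_ct L \<pi> \<mu> (sqrt (2 * \<epsilon>\<^sup>2 / (1 + 2 * \<epsilon>\<^sup>2)))"
    by (rule tau_ct_le_T2[OF c e(2)])
  also have "\<dots> \<le> T2_ct L \<pi> \<mu> \<epsilon>"
    using jc_bounds[OF c e(2)]
      by (intro T2_ct_antimono[OF \<epsilon>(1) le_sqrt_two_eps[OF \<epsilon>(1) e(1)]]) linarith
  finally show "tau_ct \<mu> lam \<phi> (2 * \<epsilon>\<^sup>2) \<le> T2_ct L \<pi> \<mu> \<epsilon>" .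
  show "T2_ct L \<pi> \<mu> \<epsilon> \<le> 6 / \<epsilon> ^ 4 * tau_ct \<mu> lam \<phi> (\<epsilon>\<^sup>2 / 2)"
    by (rule T2_ct_le_eps_tau[OF \<epsilon>(1) e])
qed
end

text \<open>This includes |\<beta>_j| = 1, where lam_dt \<beta> j = 0 and the extended-real quotient is \<infinity>
  (or 0 if S = 0).\<close>

lemma tau_term_le_ereal_iff:
  assumes "\<beta> j \<noteq> 0" "\<bar>\<beta> j\<bar> \<le> 1" "0 \<le> S" "0 \<le> x"
  shows "ereal (ln (1 + S)) / (2 * lam_dt \<beta> j) \<le> ereal x \<longleftrightarrow> ln (1 + S) \<le> 2 * x * - ln \<bar>\<beta> j\<bar>"
proof (cases "\<bar>\<beta> j\<bar> = 1")
  case True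
  then show ?thesis using assms by (cases "S = 0") (auto simp: lam_dt_def)
next
  case False
  define l where "l = - ln \<bar>\<beta> j\<bar>"
  have "0 < l" using False assms unfolding l_def by simp
  moreover have "lam_dt \<beta> j = ereal l" using assms unfolding lam_dt_def l_def by simp
  ultimately show ?thesis unfolding l_def[symmetric] by (simp add: pos_divide_le_eq mult_ac)
qed

lemma abs_pow_eq_exp:
  fixes \<beta> :: real
  assumes "\<beta> \<noteq> 0"
  shows "(\<beta>\<^sup>2) ^ m = exp (- 2 * real m * - ln \<bar>\<beta>\<bar>)"
proof -
  have "(\<beta>\<^sup>2) ^ m = exp (ln \<bar>\<beta>\<bar>) ^ (2 * m)" using assms by (simp add: power_mult power2_abs)
  then show ?thesis by (simp flip: exp_of_nat_mult)
qed

locale dt_chain =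
  fixes K :: "'a::finite \<Rightarrow> 'a \<Rightarrow> real" and \<pi> \<mu> :: "'a \<Rightarrow> real"
    and \<beta> :: "nat \<Rightarrow> real" and \<phi> :: "nat \<Rightarrow> 'a \<Rightarrow> real"
  assumes st: "stochastic K" and irr: "irreducible_kernel K" and \<pi>: "pos_prob_vec \<pi>"
    and rev: "reversible K \<pi>" and \<mu>: "prob_vec \<mu>" and sp: "dt_spectral K \<pi> \<beta> \<phi>"
begin

definition d2_sq :: "nat \<Rightarrow> real" where
  "d2_sq m = (\<Sum>i=1..CARD('a) - 1. (\<beta> i)\<^sup>2 ^ m * (mu_of \<mu> (\<phi> i))\<^sup>2)"

lemma orthonormal: "pi_orthonormal \<pi> \<phi>"
  using \<pi> sp unfolding pi_orthonormal_def pos_prob_vec_def dt_spectral_def by auto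

lemma abs_beta_le_1: "i \<le> CARD('a) - 1 \<Longrightarrow> \<bar>\<beta> i\<bar> \<le> 1"
  using dt_spectral_abs_le_1[OF st sp] le_card_minus_one_iff by blast

lemma abs_beta_antimono: "1 \<le> i \<Longrightarrow> i \<le> j \<Longrightarrow> j \<le> CARD('a) - 1 \<Longrightarrow> \<bar>\<beta> j\<bar> \<le> \<bar>\<beta> i\<bar>"
  using sp le_card_minus_one_iff[of j] unfolding dt_spectral_def by blast

lemma beta_pow_antimono:
  "1 \<le> i \<Longrightarrow> i \<le> j \<Longrightarrow> j \<le> CARD('a) - 1 \<Longrightarrow> (\<beta> j)\<^sup>2 ^ m \<le> (\<beta> i)\<^sup>2 ^ m"
  by (rule power_mono) (use abs_beta_antimono in \<open>auto simp: abs_le_square_iff\<close>)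

lemma beta_pow_le_1: "i \<le> CARD('a) - 1 \<Longrightarrow> (\<beta> i)\<^sup>2 ^ m \<le> 1"
  by (rule power_le_one) (use abs_beta_le_1 in \<open>auto simp: abs_square_le_1\<close>)

lemma beta_pow_le_exp:
  assumes "j \<le> CARD('a) - 1" "s \<le> real m" "0 < m"
  shows "(\<beta> j)\<^sup>2 ^ m \<le> exp (- 2 * s * - ln \<bar>\<beta> j\<bar>)"
proof (cases "\<beta> j = 0")
  case False
  have "0 \<le> - ln \<bar>\<beta> j\<bar>" using abs_beta_le_1[OF assms(1)] False by simp
  then show ?thesis unfolding abs_pow_eq_exp[OF False] using assms(2)
    by (simp add: mult_right_mono_neg)
qed (use assms(3) in \<open>simp add: power_0_left\<close>)

lemma pi_sq_eq: "pi_sq \<pi> (\<lambda>y. \<mu> y / \<pi> y) - 1 = spec_sum \<mu> \<phi> (CARD('a) - 1)"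
  using pi_sq_density_eq_spec_sum[OF orthonormal _ \<mu>] sp unfolding dt_spectral_def by auto

lemma d2_dt_eq: "d2_dt K \<pi> \<mu> m = sqrt (d2_sq m)"
proof -
  have eig: "\<And>i x. i < CARD('a) \<Longrightarrow> (\<Sum>y\<in>UNIV. K x y * \<phi> i y) = \<beta> i * \<phi> i x"
    using sp unfolding dt_spectral_def by auto
  have "d2_dt K \<pi> \<mu> m = sqrt (\<Sum>i=1..CARD('a) - 1. (\<beta> i ^ m)\<^sup>2 * (mu_of \<mu> (\<phi> i))\<^sup>2)"
    unfolding d2_dt_def
    by (rule l2norm_density_spectral[OF orthonormal _ \<mu> _ mpow_spectral[OF orthonormal rev eig]])
      (use sp in \<open>auto simp: dt_spectral_def\<close>)
  then show ?thesis unfolding d2_sq_def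
    by (simp flip: power_mult power2_eq_square add: mult.commute)
qed

lemma d2_dt_le_iff: "0 \<le> \<theta> \<Longrightarrow> d2_dt K \<pi> \<mu> m \<le> \<theta> \<longleftrightarrow> d2_sq m \<le> \<theta>\<^sup>2"
  unfolding d2_dt_eq by (metis abs_of_nonneg real_sqrt_abs real_sqrt_le_iff)

lemma T2_dt_le:
  assumes "0 \<le> \<theta>" "d2_sq m \<le> \<theta>\<^sup>2"
  shows "T2_dt K \<pi> \<mu> \<theta> \<le> enat m"
proof -
  have m: "d2_dt K \<pi> \<mu> m \<le> \<theta>" using assms d2_dt_le_iff by blast
  then show ?thesis unfolding T2_dt_def using Least_le[of "\<lambda>m. d2_dt K \<pi> \<mu> m \<le> \<theta>", OF m] by auto
qed

lemma T2_dt_ge: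
  assumes "0 \<le> \<theta>" "\<And>m. d2_sq m \<le> \<theta>\<^sup>2 \<Longrightarrow> x \<le> ereal (real m)"
  shows "x \<le> ereal_of_enat (T2_dt K \<pi> \<mu> \<theta>)"
proof (cases "\<exists>m. d2_dt K \<pi> \<mu> m \<le> \<theta>")
  case True
  then have "d2_sq (LEAST m. d2_dt K \<pi> \<mu> m \<le> \<theta>) \<le> \<theta>\<^sup>2"
    using LeastI_ex[OF True] d2_dt_le_iff[OF assms(1)] by blast
  then show ?thesis using True assms(2) unfolding T2_dt_def by simp
qed (simp add: T2_dt_def)

lemma T2_dt_antimono:
  assumes "\<theta>1 \<le> \<theta>2"
  shows "T2_dt K \<pi> \<mu> \<theta>2 \<le> T2_dt K \<pi> \<mu> \<theta>1"
proof (cases "\<exists>m. d2_dt K \<pi> \<mu> m \<le> \<theta>1")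
  case True
  have "(LEAST m. d2_dt K \<pi> \<mu> m \<le> \<theta>2) \<le> (LEAST m. d2_dt K \<pi> \<mu> m \<le> \<theta>1)"
    by (rule Least_le) (use LeastI_ex[OF True] assms in simp)
  then show ?thesis using True assms unfolding T2_dt_def by (auto intro: order_trans)
qed (simp add: T2_dt_def)

lemma tau_dt_ge_term:
  assumes "jc \<mu> \<phi> c \<le> j" "j \<le> CARD('a) - 1"
  shows "ereal (ln (1 + spec_sum \<mu> \<phi> j)) / (2 * lam_dt \<beta> j) \<le> tau_dt \<mu> \<beta> \<phi> c"
  unfolding tau_dt_def using assms le_card_minus_one_iff[of j] by (intro Max_ge imageI) auto

lemma tau_dt_leI:
  assumes c: "0 < c" "c < spec_sum \<mu> \<phi> (CARD('a) - 1)"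
    and le: "\<And>j. jc \<mu> \<phi> c \<le> j \<Longrightarrow> j \<le> CARD('a) - 1 \<Longrightarrow>
      ereal (ln (1 + spec_sum \<mu> \<phi> j)) / (2 * lam_dt \<beta> j) \<le> x"
  shows "tau_dt \<mu> \<beta> \<phi> c \<le> x"
  unfolding tau_dt_def
proof (rule Max.boundedI)
  show "(\<lambda>j. ereal (ln (1 + spec_sum \<mu> \<phi> j)) / (2 * lam_dt \<beta> j)) ` {jc \<mu> \<phi> c..<CARD('a)} \<noteq> {}"
    using jc_bounds(2)[OF c] le_card_minus_one_iff[where 'a='a] by simp
qed (use le le_card_minus_one_iff in auto)

lemma tau_dt_nonneg:
  assumes c: "0 < c" "c < spec_sum \<mu> \<phi> (CARD('a) - 1)"
  shows "0 \<le> tau_dt \<mu> \<beta> \<phi> c"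
proof -
  define j where "j = jc \<mu> \<phi> c"
  have j: "j \<le> CARD('a) - 1" using jc_bounds(2)[OF c] unfolding j_def .
  have "0 \<le> ereal (ln (1 + spec_sum \<mu> \<phi> j)) / (2 * lam_dt \<beta> j)"
    using spec_sum_nonneg[of \<mu> \<phi> j] abs_beta_le_1[OF j]
    by (auto simp: lam_dt_def ereal_divide divide_nonneg_nonneg)
  also have "\<dots> \<le> tau_dt \<mu> \<beta> \<phi> c" using tau_dt_ge_term j unfolding j_def by blast
  finally show ?thesis .
qed

lemma ln_spec_sum_le_tau_dt:
  assumes c: "0 < c" "c < spec_sum \<mu> \<phi> (CARD('a) - 1)" and \<tau>: "tau_dt \<mu> \<beta> \<phi> c = ereal \<tau>"
    and j: "jc \<mu> \<phi> c \<le> j" "j \<le> CARD('a) - 1" and \<beta>j: "\<beta> j \<noteq> 0"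
  shows "ln (1 + spec_sum \<mu> \<phi> j) \<le> 2 * \<tau> * - ln \<bar>\<beta> j\<bar>"
  using tau_dt_ge_term[OF j] tau_dt_nonneg[OF c]
    tau_term_le_ereal_iff[where \<beta>=\<beta> and j=j, OF \<beta>j abs_beta_le_1[OF j(2)] spec_sum_nonneg[of \<mu> \<phi> j]]
    \<tau> by simp

lemma tau_dt_le_T2:
  assumes c: "0 < c" "c < spec_sum \<mu> \<phi> (CARD('a) - 1)"
  shows "tau_dt \<mu> \<beta> \<phi> c \<le> ereal_of_enat (T2_dt K \<pi> \<mu> (sqrt (c / (1 + c))))"
proof (rule T2_dt_ge)
  fix m assume m: "d2_sq m \<le> (sqrt (c / (1 + c)))\<^sup>2"
  show "tau_dt \<mu> \<beta> \<phi> c \<le> ereal (real m)"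
  proof (rule tau_dt_leI[OF c])
    fix j assume j: "jc \<mu> \<phi> c \<le> j" "j \<le> CARD('a) - 1"
    show "ereal (ln (1 + spec_sum \<mu> \<phi> j)) / (2 * lam_dt \<beta> j) \<le> ereal (real m)"
    proof (cases "\<beta> j = 0")
      case True
      then show ?thesis by (simp add: lam_dt_def)
    next
      case False
      have "(\<beta> j)\<^sup>2 ^ m * (1 + (\<Sum>i=1..j. (mu_of \<mu> (\<phi> i))\<^sup>2)) < 1"
      proof (rule decreasing_weight_bound[where N = "CARD('a) - 1"])
        show "1 \<le> j" using j jc_bounds[OF c] by simp
        show "(\<beta> j)\<^sup>2 ^ m \<le> (\<beta> i)\<^sup>2 ^ m" if "1 \<le> i" "i \<le> j" for i
          using beta_pow_antimono that j by simp
        show "c < (\<Sum>i=1..j. (mu_of \<mu> (\<phi> i))\<^sup>2)"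
          using jc_bounds(3)[OF c] spec_sum_mono[OF j(1), of \<mu> \<phi>] unfolding spec_sum_def by simp
        show "(\<Sum>i=1..CARD('a) - 1. (\<beta> i)\<^sup>2 ^ m * (mu_of \<mu> (\<phi> i))\<^sup>2) \<le> c / (1 + c)"
          using m c unfolding d2_sq_def by simp
      qed (use j c in auto)
      then have "1 + spec_sum \<mu> \<phi> j \<le> exp (2 * real m * - ln \<bar>\<beta> j\<bar>)"
        unfolding spec_sum_def abs_pow_eq_exp[OF False] by (simp add: exp_minus field_simps)
      then have "ln (1 + spec_sum \<mu> \<phi> j) \<le> 2 * real m * - ln \<bar>\<beta> j\<bar>"
        using ln_le_cancel_iff[of "1 + spec_sum \<mu> \<phi> j"] spec_sum_nonneg[of \<mu> \<phi> j]
        by (metis add_pos_nonneg ln_exp exp_gt_zero zero_less_one)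
      then show ?thesis
        using tau_term_le_ereal_iff[where \<beta>=\<beta> and j=j, OF False abs_beta_le_1[OF j(2)]
            spec_sum_nonneg[of \<mu> \<phi> j]]
        by simp
    qed
  qed
qed (use c in simp)

text \<open>Since |\<beta>_j| decreases, \<beta>_j(c) = 0 kills the whole tail j \<ge> j(c) after one step.\<close>

lemma beta_jc_zero:
  assumes c: "0 < c" "c < spec_sum \<mu> \<phi> (CARD('a) - 1)" and \<beta>0: "\<beta> (jc \<mu> \<phi> c) = 0"
  shows "tau_dt \<mu> \<beta> \<phi> c = 0" "alpha_dt \<mu> \<beta> \<phi> c = 0"
    and "0 \<le> \<theta> \<Longrightarrow> c \<le> \<theta>\<^sup>2 \<Longrightarrow> T2_dt K \<pi> \<mu> \<theta> \<le> 1"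
proof -
  define j0 where "j0 = jc \<mu> \<phi> c"
  have j0: "1 \<le> j0" "j0 \<le> CARD('a) - 1" using jc_bounds[OF c] unfolding j0_def by auto
  have zero: "\<beta> j = 0" if "j0 \<le> j" "j \<le> CARD('a) - 1" for j
    using abs_beta_antimono[OF j0(1) that] \<beta>0 unfolding j0_def by simp
  have "tau_dt \<mu> \<beta> \<phi> c \<le> 0"
    by (rule tau_dt_leI[OF c]) (use zero in \<open>simp add: j0_def lam_dt_def\<close>)
  then show tau: "tau_dt \<mu> \<beta> \<phi> c = 0" using tau_dt_nonneg[OF c] by simp
  show "alpha_dt \<mu> \<beta> \<phi> c = 0" unfolding alpha_dt_def tau by simp
  assume \<theta>: "0 \<le> \<theta>" "c \<le> \<theta>\<^sup>2"
  have "d2_sq 1 \<le> (\<Sum>i=1..CARD('a) - 1. if i < j0 then (mu_of \<mu> (\<phi> i))\<^sup>2 else 0)"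
    unfolding d2_sq_def
    by (intro sum_mono) (use zero beta_pow_le_1[of _ 1] in \<open>auto intro: mult_left_le_one_le\<close>)
  also have "\<dots> = (\<Sum>i=1..j0 - 1. (mu_of \<mu> (\<phi> i))\<^sup>2)"
    using j0 by (intro sum.mono_neutral_cong_right) auto
  also have "\<dots> \<le> \<theta>\<^sup>2" using jc_bounds(4)[OF c] \<theta> unfolding j0_def spec_sum_def by simp
  finally show "T2_dt K \<pi> \<mu> \<theta> \<le> 1" using T2_dt_le[OF \<theta>(1)] by (simp add: one_enat_def)
qed

lemma alpha_dt_bounds:
  assumes c: "0 < c" "c < spec_sum \<mu> \<phi> (CARD('a) - 1)"
    and \<tau>: "tau_dt \<mu> \<beta> \<phi> c = ereal \<tau>" and \<beta>0: "\<beta> (jc \<mu> \<phi> c) \<noteq> 0"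
  shows "(alpha_dt \<mu> \<beta> \<phi> c)\<^sup>2 = \<tau> * - ln \<bar>\<beta> (jc \<mu> \<phi> c)\<bar>"
    and "0 < alpha_dt \<mu> \<beta> \<phi> c" "ln (1 + c) \<le> 2 * (alpha_dt \<mu> \<beta> \<phi> c)\<^sup>2"
proof -
  define l where "l = - ln \<bar>\<beta> (jc \<mu> \<phi> c)\<bar>"
  have "ln (1 + c) < ln (1 + spec_sum \<mu> \<phi> (jc \<mu> \<phi> c))" using jc_bounds(3)[OF c] c by simp
  also have "\<dots> \<le> 2 * \<tau> * l"
    using ln_spec_sum_le_tau_dt[OF c \<tau> _ _ \<beta>0] jc_bounds(2)[OF c] unfolding l_def by simp
  finally have "ln (1 + c) < 2 * (\<tau> * l)" by simp
  moreover have "0 < ln (1 + c)" using c by simp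
  moreover have "alpha_dt \<mu> \<beta> \<phi> c = sqrt (\<tau> * l)"
    unfolding alpha_dt_def \<tau> lam_dt_def l_def using \<beta>0 by simp
  ultimately show "(alpha_dt \<mu> \<beta> \<phi> c)\<^sup>2 = \<tau> * - ln \<bar>\<beta> (jc \<mu> \<phi> c)\<bar>"
    "0 < alpha_dt \<mu> \<beta> \<phi> c" "ln (1 + c) \<le> 2 * (alpha_dt \<mu> \<beta> \<phi> c)\<^sup>2"
    unfolding l_def by auto
qed

lemma d2_sq_le_scaled_tau:
  assumes c: "0 < c" "c < spec_sum \<mu> \<phi> (CARD('a) - 1)" and A: "0 < A"
    and \<tau>: "tau_dt \<mu> \<beta> \<phi> c = ereal \<tau>" and \<beta>0: "\<beta> (jc \<mu> \<phi> c) \<noteq> 0"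
  defines "\<alpha> \<equiv> alpha_dt \<mu> \<beta> \<phi> c"
  assumes m: "\<tau> * ((\<alpha> + A) / \<alpha>) \<le> real m" "0 < m"
  shows "d2_sq m \<le> c + (A + \<alpha>) / (A * exp (\<alpha> * A))"
proof -
  define j0 where "j0 = jc \<mu> \<phi> c"
  define s where "s = \<tau> * ((\<alpha> + A) / \<alpha>)"
  have j0: "1 \<le> j0" "j0 \<le> CARD('a) - 1" using jc_bounds[OF c] unfolding j0_def by auto
  have \<alpha>: "0 < \<alpha>" "\<alpha>\<^sup>2 = \<tau> * - ln \<bar>\<beta> j0\<bar>"
    using alpha_dt_bounds[OF c \<tau> \<beta>0] unfolding \<alpha>_def j0_def by auto
  have pow_le: "(\<beta> j)\<^sup>2 ^ m \<le> exp (- 2 * s * - ln \<bar>\<beta> j\<bar>)" if "j \<le> CARD('a) - 1" for j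
    using beta_pow_le_exp[OF that _ m(2)] m(1) unfolding s_def .
  have "(\<Sum>i=1..CARD('a) - 1. (mu_of \<mu> (\<phi> i))\<^sup>2 * (\<beta> i)\<^sup>2 ^ m)
      \<le> c + (A + \<alpha>) / (A * exp (\<alpha> * A))"
  proof (rule weighted_sum_profile_bound[OF _ j0 _ _ _ _ \<alpha>(1) A])
    show "(\<Sum>i=1..j0-1. (mu_of \<mu> (\<phi> i))\<^sup>2) \<le> c"
      using jc_bounds(4)[OF c] unfolding j0_def spec_sum_def .
    show "(\<beta> i)\<^sup>2 ^ m \<le> 1" if "1 \<le> i" "i < j0" for i
      using beta_pow_le_1 that j0 by simp
    show "(\<beta> (Suc j))\<^sup>2 ^ m \<le> (\<beta> j)\<^sup>2 ^ m" if "j0 \<le> j" "j < CARD('a) - 1" for j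
      using beta_pow_antimono that j0 by simp
    show "(\<beta> j)\<^sup>2 ^ m \<le> (1 + (\<Sum>i=1..j. (mu_of \<mu> (\<phi> i))\<^sup>2)) powr (- ((\<alpha> + A) / \<alpha>))"
      if j: "j0 \<le> j" "j \<le> CARD('a) - 1" for j
    proof (cases "\<beta> j = 0")
      case False
      have "exp (- 2 * s * - ln \<bar>\<beta> j\<bar>) \<le> (1 + (\<Sum>i=1..j. (mu_of \<mu> (\<phi> i))\<^sup>2)) powr (- ((\<alpha> + A) / \<alpha>))"
        unfolding s_def
        by (rule exp_le_powr_of_ln_le)
          (use ln_spec_sum_le_tau_dt[OF c \<tau> _ _ False] j \<alpha> A
            in \<open>auto simp: j0_def spec_sum_def intro: sum_nonneg\<close>)
      then show ?thesis using pow_le[OF j(2)] by linarith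
    qed (use m(2) in \<open>simp add: power_0_left\<close>)
    have "s * - ln \<bar>\<beta> j0\<bar> = \<alpha>\<^sup>2 * ((\<alpha> + A) / \<alpha>)"
      unfolding s_def \<alpha>(2) by (simp only: mult_ac)
    then have start: "- 2 * s * - ln \<bar>\<beta> j0\<bar> = - 2 * \<alpha> * (\<alpha> + A)"
      using \<alpha>(1) by (simp add: power2_eq_square)
    show "(\<beta> j0)\<^sup>2 ^ m \<le> exp (- 2 * \<alpha> * (\<alpha> + A))"
      using pow_le[OF j0(2)] unfolding start .
  qed auto
  then show ?thesis unfolding d2_sq_def by (simp add: mult.commute)
qed

lemma T2_dt_le_scaled_tau:
  assumes c: "0 < c" "c < spec_sum \<mu> \<phi> (CARD('a) - 1)" and A: "0 < A"
    and \<tau>: "tau_dt \<mu> \<beta> \<phi> c = ereal \<tau>" and \<beta>0: "\<beta> (jc \<mu> \<phi> c) \<noteq> 0"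
  defines "\<alpha> \<equiv> alpha_dt \<mu> \<beta> \<phi> c"
  shows "ereal_of_enat (T2_dt K \<pi> \<mu> (sqrt (c + (A + \<alpha>) / (A * exp (\<alpha> * A)))))
    \<le> ereal (\<tau> * ((\<alpha> + A) / \<alpha>) + 1)"
proof -
  define m where "m = nat \<lceil>\<tau> * ((\<alpha> + A) / \<alpha>)\<rceil>"
  have \<alpha>: "0 < \<alpha>" "\<alpha>\<^sup>2 = \<tau> * - ln \<bar>\<beta> (jc \<mu> \<phi> c)\<bar>"
    using alpha_dt_bounds[OF c \<tau> \<beta>0] unfolding \<alpha>_def by auto
  have "0 \<le> \<tau>" using tau_dt_nonneg[OF c] \<tau> by simp
  then have "0 < \<tau> * ((\<alpha> + A) / \<alpha>)" using \<alpha> A by (cases "\<tau> = 0") auto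
  then have m: "\<tau> * ((\<alpha> + A) / \<alpha>) \<le> real m" "real m < \<tau> * ((\<alpha> + A) / \<alpha>) + 1" "0 < m"
    unfolding m_def by linarith+
  have "T2_dt K \<pi> \<mu> (sqrt (c + (A + \<alpha>) / (A * exp (\<alpha> * A)))) \<le> enat m"
    using d2_sq_le_scaled_tau[OF c A \<tau> \<beta>0 m(1,3)[unfolded \<alpha>_def]] c A \<alpha>
    unfolding \<alpha>_def by (intro T2_dt_le) auto
  then show ?thesis using m(2)
    by (cases "T2_dt K \<pi> \<mu> (sqrt (c + (A + \<alpha>) / (A * exp (\<alpha> * A))))") auto
qed
lemma mixing_time_bounds:
  assumes c: "0 < c" "c < pi_sq \<pi> (\<lambda>y. \<mu> y / \<pi> y) - 1" and A: "0 < A"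
  shows "let \<alpha> = alpha_dt \<mu> \<beta> \<phi> c in
           ereal (\<alpha> / (\<alpha> + A)) *
             (ereal_of_enat (T2_dt K \<pi> \<mu> (sqrt (c + (A + \<alpha>) / (A * exp (\<alpha> * A))))) - 1)
             \<le> tau_dt \<mu> \<beta> \<phi> c
           \<and> tau_dt \<mu> \<beta> \<phi> c \<le> ereal_of_enat (T2_dt K \<pi> \<mu> (sqrt (c / (1 + c))))"
proof -
  note c' = c[unfolded pi_sq_eq]
  define \<alpha> where "\<alpha> = alpha_dt \<mu> \<beta> \<phi> c"
  define T where "T = ereal_of_enat (T2_dt K \<pi> \<mu> (sqrt (c + (A + \<alpha>) / (A * exp (\<alpha> * A)))))"
  have "ereal (\<alpha> / (\<alpha> + A)) * (T - 1) \<le> tau_dt \<mu> \<beta> \<phi> c"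
  proof (cases "tau_dt \<mu> \<beta> \<phi> c")
    case (real \<tau>)
    show ?thesis
    proof (cases "\<beta> (jc \<mu> \<phi> c) = 0")
      case True
      then show ?thesis using beta_jc_zero(1,2)[OF c'] unfolding \<alpha>_def
        by (simp flip: zero_ereal_def)
    next
      case False
      have \<alpha>: "0 < \<alpha>" using alpha_dt_bounds(2)[OF c' real False] unfolding \<alpha>_def .
      have "T \<le> ereal (\<tau> * ((\<alpha> + A) / \<alpha>) + 1)"
        using T2_dt_le_scaled_tau[OF c' A real False] unfolding T_def \<alpha>_def .
      then obtain k where T: "T = ereal k" "k - 1 \<le> \<tau> * ((\<alpha> + A) / \<alpha>)"
        unfolding T_def by (cases "T2_dt K \<pi> \<mu> (sqrt (c + (A + \<alpha>) / (A * exp (\<alpha> * A))))") auto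
      have "\<alpha> / (\<alpha> + A) * (k - 1) \<le> \<alpha> / (\<alpha> + A) * (\<tau> * ((\<alpha> + A) / \<alpha>))"
        using T(2) \<alpha> A by (intro mult_left_mono) auto
      also have "\<dots> = \<tau>" using \<alpha> A by simp
      finally show ?thesis unfolding T(1) real by (simp add: one_ereal_def)
    qed
  qed (use tau_dt_nonneg[OF c'] in auto)
  then show ?thesis using tau_dt_le_T2[OF c'] unfolding Let_def \<alpha>_def T_def by simp
qed

lemma T2_dt_le_eps_tau:
  assumes \<epsilon>: "0 < \<epsilon>" "\<epsilon>\<^sup>2 < 1/2" and P: "2 * \<epsilon>\<^sup>2 < spec_sum \<mu> \<phi> (CARD('a) - 1)"
  shows "ereal_of_enat (T2_dt K \<pi> \<mu> \<epsilon>) \<le> ereal (6 / \<epsilon> ^ 4) * tau_dt \<mu> \<beta> \<phi> (\<epsilon>\<^sup>2 / 2) + 1"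
proof -
  define c where "c = \<epsilon>\<^sup>2 / 2"
  have "0 < \<epsilon>\<^sup>2" using \<epsilon>(1) by simp
  then have c: "0 < c" "c < spec_sum \<mu> \<phi> (CARD('a) - 1)" using P unfolding c_def by linarith+
  show ?thesis
    unfolding c_def[symmetric]
  proof (cases "tau_dt \<mu> \<beta> \<phi> c")
    case (real \<tau>)
    show "ereal_of_enat (T2_dt K \<pi> \<mu> \<epsilon>) \<le> ereal (6 / \<epsilon> ^ 4) * tau_dt \<mu> \<beta> \<phi> c + 1"
    proof (cases "\<beta> (jc \<mu> \<phi> c) = 0")
      case True
      have "T2_dt K \<pi> \<mu> \<epsilon> \<le> 1" by (rule beta_jc_zero(3)[OF c True]) (use \<epsilon> in \<open>auto simp: c_def\<close>)
      then show ?thesis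
        using beta_jc_zero(1)[OF c True] ereal_of_enat_le_iff[of "T2_dt K \<pi> \<mu> \<epsilon>" "enat 1"]
        by (simp add: one_enat_def one_ereal_def)
    next
      case False
      define \<alpha> where "\<alpha> = alpha_dt \<mu> \<beta> \<phi> c"
      define A where "A = (6 / \<epsilon> ^ 4 - 1) * \<alpha>"
      have \<alpha>: "0 < \<alpha>" "ln (1 + \<epsilon>\<^sup>2 / 2) \<le> 2 * \<alpha>\<^sup>2"
        using alpha_dt_bounds(2,3)[OF c real False] unfolding \<alpha>_def c_def by auto
      note choice = eps_choice[OF \<epsilon> \<alpha>, folded A_def]
      have "ereal_of_enat (T2_dt K \<pi> \<mu> \<epsilon>)
          \<le> ereal_of_enat (T2_dt K \<pi> \<mu> (sqrt (c + (A + \<alpha>) / (A * exp (\<alpha> * A)))))"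
        using T2_dt_antimono choice(3) unfolding c_def by simp
      also have "\<dots> \<le> ereal (\<tau> * ((\<alpha> + A) / \<alpha>) + 1)"
        using T2_dt_le_scaled_tau[OF c choice(1) real False] unfolding \<alpha>_def .
      finally show ?thesis unfolding choice(2) real by (simp add: mult.commute)
    qed
  qed (use tau_dt_nonneg[OF c] \<epsilon> in auto)
qed

lemma mixing_time_eps_bounds:
  assumes \<epsilon>: "0 < \<epsilon>" "\<epsilon> < sqrt (min (pi_sq \<pi> (\<lambda>y. \<mu> y / \<pi> y - 1)) 1 / 2)"
  shows "tau_dt \<mu> \<beta> \<phi> (2 * \<epsilon>\<^sup>2) \<le> ereal_of_enat (T2_dt K \<pi> \<mu> \<epsilon>)
    \<and> ereal_of_enat (T2_dt K \<pi> \<mu> \<epsilon>) \<le> ereal (6 / \<epsilon> ^ 4) * tau_dt \<mu> \<beta> \<phi> (\<epsilon>\<^sup>2 / 2) + 1"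
proof
  have e: "\<epsilon>\<^sup>2 < 1/2" "2 * \<epsilon>\<^sup>2 < spec_sum \<mu> \<phi> (CARD('a) - 1)"
    using eps_range[OF \<epsilon>[unfolded pi_sq_centered[OF \<pi> \<mu>] pi_sq_eq]] by auto
  have c: "0 < 2 * \<epsilon>\<^sup>2" using \<epsilon> by simp
  have "tau_dt \<mu> \<beta> \<phi> (2 * \<epsilon>\<^sup>2) \<le> ereal_of_enat (T2_dt K \<pi> \<mu> (sqrt (2 * \<epsilon>\<^sup>2 / (1 + 2 * \<epsilon>\<^sup>2))))"
    by (rule tau_dt_le_T2[OF c e(2)])
  also have "\<dots> \<le> ereal_of_enat (T2_dt K \<pi> \<mu> \<epsilon>)"
    using T2_dt_antimono[OF le_sqrt_two_eps[OF \<epsilon>(1) e(1)]] by simp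
  finally show "tau_dt \<mu> \<beta> \<phi> (2 * \<epsilon>\<^sup>2) \<le> ereal_of_enat (T2_dt K \<pi> \<mu> \<epsilon>)" .
  show "ereal_of_enat (T2_dt K \<pi> \<mu> \<epsilon>) \<le> ereal (6 / \<epsilon> ^ 4) * tau_dt \<mu> \<beta> \<phi> (\<epsilon>\<^sup>2 / 2) + 1"
    by (rule T2_dt_le_eps_tau[OF \<epsilon>(1) e])
qed

end

theorem proposition3p4:
  fixes \<mu> \<pi> :: "'a::finite \<Rightarrow> real"
    and L K :: "'a \<Rightarrow> 'a \<Rightarrow> real"
    and lam \<beta> :: "nat \<Rightarrow> real"
    and \<phi> \<psi> :: "nat \<Rightarrow> 'a \<Rightarrow> real"
  shows
   "(generator L \<and> irreducible_kernel L \<and> pos_prob_vec \<pi> \<and> reversible L \<pi> \<and> prob_vec \<mu>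
       \<and> ct_spectral L \<pi> lam \<phi> \<longrightarrow>
      (\<forall>c A. 0 < c \<and> c < pi_sq \<pi> (\<lambda>y. \<mu> y / \<pi> y) - 1 \<and> 0 < A \<longrightarrow>
         (let \<alpha> = alpha_ct \<mu> lam \<phi> c in
           \<alpha> / (\<alpha> + A) * T2_ct L \<pi> \<mu> (sqrt (c + (A + \<alpha>) / (A * exp (\<alpha> * A))))
             \<le> tau_ct \<mu> lam \<phi> c
           \<and> tau_ct \<mu> lam \<phi> c \<le> T2_ct L \<pi> \<mu> (sqrt (c / (1 + c))))) \<and>
      (\<forall>\<epsilon>. 0 < \<epsilon> \<and> \<epsilon> < sqrt (min (pi_sq \<pi> (\<lambda>y. \<mu> y / \<pi> y - 1)) 1 / 2) \<longrightarrow>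
         tau_ct \<mu> lam \<phi> (2 * \<epsilon>\<^sup>2) \<le> T2_ct L \<pi> \<mu> \<epsilon>
         \<and> T2_ct L \<pi> \<mu> \<epsilon> \<le> 6 / \<epsilon> ^ 4 * tau_ct \<mu> lam \<phi> (\<epsilon>\<^sup>2 / 2)))
    \<and>
    (stochastic K \<and> irreducible_kernel K \<and> pos_prob_vec \<pi> \<and> reversible K \<pi> \<and> prob_vec \<mu>
       \<and> dt_spectral K \<pi> \<beta> \<psi> \<longrightarrow>
      (\<forall>c A. 0 < c \<and> c < pi_sq \<pi> (\<lambda>y. \<mu> y / \<pi> y) - 1 \<and> 0 < A \<longrightarrow>
         (let \<alpha> = alpha_dt \<mu> \<beta> \<psi> c in
           ereal (\<alpha> / (\<alpha> + A)) *
             (ereal_of_enat (T2_dt K \<pi> \<mu> (sqrt (c + (A + \<alpha>) / (A * exp (\<alpha> * A))))) - 1)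
             \<le> tau_dt \<mu> \<beta> \<psi> c
           \<and> tau_dt \<mu> \<beta> \<psi> c \<le> ereal_of_enat (T2_dt K \<pi> \<mu> (sqrt (c / (1 + c)))))) \<and>
      (\<forall>\<epsilon>. 0 < \<epsilon> \<and> \<epsilon> < sqrt (min (pi_sq \<pi> (\<lambda>y. \<mu> y / \<pi> y - 1)) 1 / 2) \<longrightarrow>
         tau_dt \<mu> \<beta> \<psi> (2 * \<epsilon>\<^sup>2) \<le> ereal_of_enat (T2_dt K \<pi> \<mu> \<epsilon>)
         \<and> ereal_of_enat (T2_dt K \<pi> \<mu> \<epsilon>) \<le> ereal (6 / \<epsilon> ^ 4) * tau_dt \<mu> \<beta> \<psi> (\<epsilon>\<^sup>2 / 2) + 1))"
  using ct_chain.mixing_time_bounds[of L \<pi> \<mu> lam \<phi>] ct_chain.mixing_time_eps_bounds[of L \<pi> \<mu> lam \<phi>]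
    dt_chain.mixing_time_bounds[of K \<pi> \<mu> \<beta> \<psi>] dt_chain.mixing_time_eps_bounds[of K \<pi> \<mu> \<beta> \<psi>]
  unfolding ct_chain_def dt_chain_def by blast

end
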